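(* Let $p\ge7$, $1\le a\le p-4$, $s_\varepsilon\in\{0,\dots,p-2\}$. There exist constants $C_1,C_2,C_3>0$ (independent of $k$ and $l$) such that for every $k=k_\bullet(p-1)+k_\varepsilon$ and every $l\in\{1,\dots,\frac12d_k^{\mathrm{new}}\}$, $$0\le-(C_2+C_3(\log_pl)^2)+(p+1)l\le\frac{2(p+1)}{p-1}\bigl(\Delta_{k,l}-\Delta_{k,l-1}\bigr)\le(p+1)l+C_1(\log_pk)^2.$$
   Context: $v_p(p)=1$. $\{m\}\in\{0,\dots,p-2\}$ is the residue of $m$ mod $p-1$. $k_\varepsilon=2+\{a+2s_\varepsilon\}$, $\delta_\varepsilon=\lfloor(s_\varepsilon+\{a+s_\varepsilon\})/(p-1)\rfloor$; if $a+s_\varepsilon<p-1$, $t_1=s_\varepsilon+\delta_\varepsilon$, $t_2=a+s_\varepsilon+\delta_\varepsilon+2$; else $t_1=\{a+s_\varepsilon\}+\delta_\varepsilon+1$, $t_2=a+s_\varepsilon+\delta_\varepsilon+1$. For $k\ge2$, $k=k_\bullet(p-1)+k_\varepsilon$: $d_k^{\mathrm{Iw}}=2k_\bullet+2-2\delta_\varepsilon$; $d_k^{\mathrm{ur}}=2\lfloor(k_\bullet-t_1)/(p+1)\rfloor+1+\eta_k$ ($\eta_k=1$ if $k_\bullet-(p+1)\lfloor(k_\bullet-t_1)/(p+1)\rfloor\ge t_2$, else $0$); $d_k^{\mathrm{new}}=d_k^{\mathrm{Iw}}-2d_k^{\mathrm{ur}}$. $w_k=\exp(p(k-2))-1$.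 For $n\ge1$, $m_n(k)=\min\{n-d_k^{\mathrm{ur}},d_k^{\mathrm{Iw}}-d_k^{\mathrm{ur}}-n\}$ if $d_k^{\mathrm{ur}}<n<d_k^{\mathrm{Iw}}-d_k^{\mathrm{ur}}$, else $0$; $g_n(w)=\prod_{k\ge2,\,k\equiv k_\varepsilon}(w-w_k)^{m_n(k)}$; $g_{n,\hat k}=g_n/(w-w_k)^{m_n(k)}$; $\Delta'_{k,l}=v_p(g_{\frac12d_k^{\mathrm{Iw}}+l,\hat k}(w_k))-\frac{k-2}{2}l$ for $|l|\le\frac12d_k^{\mathrm{new}}$; $\Delta_{k,l}$ is the value at $l$ of the lower convex hull of the points $(l,\Delta'_{k,l})$. *)

theory Defs
  imports "HOL-Analysis.Analysis" "HOL-Computational_Algebra.Computational_Algebra"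
begin

text \<open>Parameters: prime p, a, s = s_eps. Weights k = kb*(p-1) + k_eps are indexed by kb (k_bullet).\<close>

definition resid :: "nat \<Rightarrow> int \<Rightarrow> int" where
  "resid p m = m mod (int p - 1)"

definition k_eps :: "nat \<Rightarrow> nat \<Rightarrow> nat \<Rightarrow> int" where
  "k_eps p a s = 2 + resid p (int a + 2 * int s)"

definition delta_eps :: "nat \<Rightarrow> nat \<Rightarrow> nat \<Rightarrow> int" where
  "delta_eps p a s = (int s + resid p (int a + int s)) div (int p - 1)"

definition t1 :: "nat \<Rightarrow> nat \<Rightarrow> nat \<Rightarrow> int" where
  "t1 p a s = (if a + s < p - 1 then int s + delta_eps p a s
               else resid p (int a + int s) + delta_eps p a s + 1)"

definition t2 :: "nat \<Rightarrow> nat \<Rightarrow> nat \<Rightarrow> int" where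
  "t2 p a s = (if a + s < p - 1 then int a + int s + delta_eps p a s + 2
               else int a + int s + delta_eps p a s + 1)"

definition wt :: "nat \<Rightarrow> nat \<Rightarrow> nat \<Rightarrow> nat \<Rightarrow> int" where
  "wt p a s kb = int kb * (int p - 1) + k_eps p a s"

definition d_Iw :: "nat \<Rightarrow> nat \<Rightarrow> nat \<Rightarrow> nat \<Rightarrow> int" where
  "d_Iw p a s kb = 2 * int kb + 2 - 2 * delta_eps p a s"

definition d_ur :: "nat \<Rightarrow> nat \<Rightarrow> nat \<Rightarrow> nat \<Rightarrow> int" where
  "d_ur p a s kb =
     (let q = (int kb - t1 p a s) div (int p + 1);
          eta = (if int kb - (int p + 1) * q \<ge> t2 p a s then 1 else 0)
      in 2 * q + 1 + eta)"

definition d_new :: "nat \<Rightarrow> nat \<Rightarrow> nat \<Rightarrow> nat \<Rightarrow> int" where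
  "d_new p a s kb = d_Iw p a s kb - 2 * d_ur p a s kb"

definition m_n :: "nat \<Rightarrow> nat \<Rightarrow> nat \<Rightarrow> int \<Rightarrow> nat \<Rightarrow> int" where
  "m_n p a s n kb =
     (if d_ur p a s kb < n \<and> n < d_Iw p a s kb - d_ur p a s kb
      then min (n - d_ur p a s kb) (d_Iw p a s kb - d_ur p a s kb - n) else 0)"

text \<open>v_p(g_{n,hat k}(w_k)) = sum over k' ~= k of m_n(k') * v_p(w_k - w_k'),
  where v_p(w_k - w_k') = v_p(exp(p(k-2)) - exp(p(k'-2))) = 1 + v_p(k - k').\<close>
definition vp_g_hat :: "nat \<Rightarrow> nat \<Rightarrow> nat \<Rightarrow> int \<Rightarrow> nat \<Rightarrow> int" where
  "vp_g_hat p a s n kb =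
     (\<Sum>kb' \<in> {kb'. kb' \<noteq> kb \<and> m_n p a s n kb' \<noteq> 0}.
        m_n p a s n kb' * (1 + int (multiplicity (int p) (wt p a s kb - wt p a s kb'))))"

definition Delta' :: "nat \<Rightarrow> nat \<Rightarrow> nat \<Rightarrow> nat \<Rightarrow> int \<Rightarrow> real" where
  "Delta' p a s kb l =
     real_of_int (vp_g_hat p a s (d_Iw p a s kb div 2 + l) kb)
     - (real_of_int (wt p a s kb) - 2) / 2 * real_of_int l"

definition lower_hull_val :: "(real \<times> real) set \<Rightarrow> real \<Rightarrow> real" where
  "lower_hull_val S x = Inf {y. (x, y) \<in> convex hull S}"

definition Delta :: "nat \<Rightarrow> nat \<Rightarrow> nat \<Rightarrow> nat \<Rightarrow> int \<Rightarrow> real" where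
  "Delta p a s kb l =
     lower_hull_val
       {(real_of_int l', Delta' p a s kb l') | l'. \<bar>l'\<bar> \<le> d_new p a s kb div 2}
       (real_of_int l)"

end

theory Submission
  imports Defs
begin

text \<open>
  Write \<open>K\<close> for \<open>k_bullet\<close> and \<open>n = d_k^Iw / 2 + l\<close>. Since \<open>v_p(w_k - w_k') = 1 + v_p(k - k')\<close>
  and passing from \<open>m_(n-1)\<close> to \<open>m_n\<close> adds \<open>1\<close> on a window of weights
  \<open>K + l \<le> k'_bullet \<le> P\<close> and subtracts \<open>1\<close> on a window \<open>Q \<le> k'_bullet \<le> K + l - 1\<close>, the
  increment \<open>\<Delta>'_(k,l) - \<Delta>'_(k,l-1)\<close> is a difference of two sums of \<open>1 + v_p(K - x)\<close> over
  intervals next to \<open>K\<close>, minus \<open>(k - 2)/2\<close>. By Legendre's formula such a sum over \<open>m\<close>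
  consecutive \<open>x\<close> is \<open>m + v_p(m!)\<close>. The formula for \<open>d^ur\<close> makes \<open>P - K = p (K - Q) + X\<close>
  with \<open>X = (p + 1) l + O(p)\<close>, and \<open>v_p((p N + X)!)\<close> is \<open>N + v_p(N!) + v_p(X!)\<close> up to one
  carry per base-\<open>p\<close> digit. Hence \<open>2 (\<Delta>'_(k,l) - \<Delta>'_(k,l-1)) = (p - 1) l + O(p + log_p k)\<close>,
  and it is even \<open>\<ge> (p - 1)(l - 1) + 3 - 2 log_p l\<close> because
  \<open>v_p(X!) \<ge> l - 1 + 2 v_p((l - 1)!) - log_p l\<close>.
  An increment of the lower convex hull \<open>\<Delta>\<close> lies between increments of \<open>\<Delta>'\<close> further out
  on either side; since the bounds are monotone in \<open>l\<close> they pass to \<open>\<Delta>\<close>, and the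
  logarithmic errors are absorbed into \<open>C_1 (log_p k)^2\<close> and \<open>C_2 + C_3 (log_p l)^2\<close>.
\<close>

section \<open>Legendre sums and base-\<open>p\<close> digit counts\<close>

lemma zle_div_iff_mult_le:
  fixes q :: int assumes "0 < q" shows "x \<le> m div q \<longleftrightarrow> x * q \<le> m"
proof
  assume "x \<le> m div q"
  hence "x * q \<le> (m div q) * q" using assms by (simp add: mult_right_mono)
  also have "\<dots> \<le> m" using assms pos_mod_sign[OF assms, of m] div_mult_mod_eq[of m q]
    by linarith
  finally show "x * q \<le> m" .
next
  assume "x * q \<le> m"
  hence "(x * q) div q \<le> m div q" using assms zdiv_mono1 by blast
  thus "x \<le> m div q" using assms by simp
qed

lemma zdiv_add_ge: fixes q :: int assumes "0 < q" shows "a div q + b div q \<le> (a + b) div q"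
  using div_add1_eq[of a b q] assms by (simp add: pos_imp_zdiv_nonneg_iff)

lemma zdiv_add_le:
  fixes q :: int assumes "0 < q" "0 \<le> a" "0 \<le> b"
  shows "(a + b) div q \<le> a div q + b div q + (if q \<le> a + b then 1 else 0)"
proof -
  have "a mod q + b mod q < 2 * q" using assms pos_mod_bound[of q a] pos_mod_bound[of q b]
    by linarith
  hence "(a mod q + b mod q) div q < 2"
    using assms zle_div_iff_mult_le[of q 2 "a mod q + b mod q"] by (simp add: mult.commute)
  moreover have "(a mod q + b mod q) div q = 0" if "a + b < q"
    using that assms by simp
  ultimately show ?thesis using div_add1_eq[of a b q] by auto
qed

lemma zdiv_add_le_self:
  fixes m :: int assumes "0 \<le> t" "1 \<le> m" shows "(z + t) div m \<le> z div m + t"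
proof -
  have "(z + t) div m \<le> (z + t * m) div m" using assms
    by (intro zdiv_mono1) (auto simp: mult_le_cancel_left1)
  also have "\<dots> = z div m + t" using assms by simp
  finally show ?thesis .
qed

lemma zdiv_succ:
  fixes q :: int assumes "0 < q"
  shows "(m + 1) div q = m div q + (if q dvd m + 1 then 1 else 0)"
proof -
  have e: "m + 1 = (m mod q + 1) + m div q * q" by simp
  have d: "(m + 1) div q = m div q + (m mod q + 1) div q"
    by (subst e, rule div_mult_self1) (use assms in simp)
  have md: "(m + 1) mod q = (m mod q + 1) mod q"
    by (subst e, rule mod_mult_self1)
  have r: "0 \<le> m mod q" "m mod q < q" using assms by simp_all
  show ?thesis
  proof (cases "m mod q + 1 = q")
    case True
    thus ?thesis using d md assms by (simp add: dvd_eq_mod_eq_0)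
  next
    case False
    hence "m mod q + 1 < q" using r by simp
    thus ?thesis using d md r by (simp add: dvd_eq_mod_eq_0)
  qed
qed

lemma int_less_power: fixes p :: int assumes "2 \<le> p" shows "int i < p ^ i"
proof -
  have "int i < 2 ^ i" by (metis less_exp of_nat_less_iff of_nat_numeral of_nat_power)
  also have "(2::int) ^ i \<le> p ^ i" using assms by (intro power_mono) auto
  finally show ?thesis .
qed

lemma multiplicity_le_nat:
  fixes p x :: int assumes "2 \<le> p" "1 \<le> x"
  shows "multiplicity p x \<le> nat x"
proof -
  have "p ^ multiplicity p x \<le> x"
    using multiplicity_dvd[of p x] assms by (simp add: zdvd_imp_le)
  thus ?thesis using int_less_power[OF assms(1), of "multiplicity p x"] by linarith
qed

definition legendre_sum :: "int \<Rightarrow> int \<Rightarrow> int" where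
  "legendre_sum p m = (\<Sum>i\<in>{1..nat m}. m div p ^ i)"

text \<open>\<open>ilog p m\<close> is \<open>\<lfloor>log_p m\<rfloor>\<close> for \<open>m \<ge> 1\<close>, and \<open>0\<close> for \<open>m \<le> 0\<close>.\<close>
definition ilog :: "int \<Rightarrow> int \<Rightarrow> nat" where
  "ilog p m = card {i\<in>{1..nat m}. p ^ i \<le> m}"

context
  fixes p :: int
  assumes p2: "2 \<le> p"
begin

lemma legendre_sum_upto:
  assumes "0 \<le> m" "nat m \<le> B"
  shows "legendre_sum p m = (\<Sum>i\<in>{1..B}. m div p ^ i)"
  unfolding legendre_sum_def
proof (rule sum.mono_neutral_left)
  show "\<forall>i\<in>{1..B} - {1..nat m}. m div p ^ i = 0"
  proof
    fix i assume "i \<in> {1..B} - {1..nat m}"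
    hence "m < int i" using assms(1) by auto
    thus "m div p ^ i = 0" using int_less_power[OF p2, of i] assms(1) by simp
  qed
qed (use assms in auto)

lemma ilog_upto:
  assumes "0 \<le> m" "nat m \<le> B"
  shows "ilog p m = card {i\<in>{1..B}. p ^ i \<le> m}"
proof -
  have "i \<le> nat m" if "p ^ i \<le> m" for i
    using int_less_power[OF p2, of i] that assms(1) by (simp add: le_nat_iff)
  hence "{i\<in>{1..B}. p ^ i \<le> m} = {i\<in>{1..nat m}. p ^ i \<le> m}"
    using assms(2) by (auto intro: le_trans[OF _ assms(2)])
  thus ?thesis unfolding ilog_def by simp
qed

lemma legendre_sum_div:
  assumes "0 \<le> m"
  shows "legendre_sum p m = m div p + legendre_sum p (m div p)"
proof -
  have "m div p \<le> m" using zdiv_mono2[of m 1 p] assms p2 by simp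
  hence mdiv: "0 \<le> m div p" "nat (m div p) \<le> nat m"
    using assms p2 by (auto simp: pos_imp_zdiv_nonneg_iff)
  have "legendre_sum p m = (\<Sum>i\<in>{1..Suc (nat m)}. m div p ^ i)"
    using legendre_sum_upto[OF assms, of "Suc (nat m)"] by simp
  also have "\<dots> = m div p ^ 1 + (\<Sum>i\<in>{Suc 1..Suc (nat m)}. m div p ^ i)"
    by (subst sum.atLeast_Suc_atMost) auto
  also have "(\<Sum>i\<in>{Suc 1..Suc (nat m)}. m div p ^ i) = (\<Sum>i\<in>{1..nat m}. m div p ^ Suc i)"
    by (rule sum.shift_bounds_cl_Suc_ivl)
  also have "(\<Sum>i\<in>{1..nat m}. m div p ^ Suc i) = legendre_sum p (m div p)"
    using legendre_sum_upto[OF mdiv] p2 by (simp add: zdiv_zmult2_eq)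
  finally show ?thesis by simp
qed

lemma ilog_div:
  assumes "p \<le> m"
  shows "ilog p m = Suc (ilog p (m div p))"
proof -
  obtain B where B: "nat m = Suc B" using assms p2 by (cases "nat m") auto
  have "m div p < m" using assms p2 by (simp add: int_div_less_self)
  hence "ilog p (m div p) = card {i\<in>{1..B}. p ^ i \<le> m div p}"
    using assms p2 B by (intro ilog_upto) (auto simp: pos_imp_zdiv_nonneg_iff)
  also have "\<dots> = card (Suc ` {i\<in>{1..B}. p ^ i \<le> m div p})"
    by (simp add: card_image)
  finally have rec: "ilog p (m div p) = card (Suc ` {i\<in>{1..B}. p ^ i \<le> m div p})" .
  have step: "p ^ Suc i \<le> m \<longleftrightarrow> p ^ i \<le> m div p" for i
    using zle_div_iff_mult_le[of p "p ^ i" m] p2 by (simp add: mult.commute)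
  have "{i\<in>{1..nat m}. p ^ i \<le> m} = insert 1 (Suc ` {i\<in>{1..B}. p ^ i \<le> m div p})"
  proof safe
    fix i assume i: "i \<in> {1..nat m}" "p ^ i \<le> m" "i \<notin> Suc ` {i\<in>{1..B}. p ^ i \<le> m div p}"
    show "i = 1"
    proof (rule ccontr)
      assume "i \<noteq> 1"
      then obtain j where "i = Suc j" "1 \<le> j" using i(1) by (cases i) auto
      thus False using i step B by auto
    qed
  qed (use assms step B in auto)
  hence "ilog p m = card (insert 1 (Suc ` {i\<in>{1..B}. p ^ i \<le> m div p}))"
    unfolding ilog_def by simp
  also have "\<dots> = Suc (ilog p (m div p))"
    unfolding rec by (subst card_insert_disjoint) auto
  finally show ?thesis .
qed

lemma ilog_less: "m < p \<Longrightarrow> ilog p m = 0"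
proof -
  assume m: "m < p"
  have "p \<le> p ^ i" if "1 \<le> i" for i
    using power_increasing[OF that, of p] p2 by simp
  hence "{i\<in>{1..nat m}. p ^ i \<le> m} = {}" using m by force
  thus ?thesis by (simp add: ilog_def)
qed

lemma legendre_sum_less: "0 \<le> m \<Longrightarrow> m < p \<Longrightarrow> legendre_sum p m = 0"
  using legendre_sum_div[of m] p2 by (simp add: legendre_sum_def)

lemma legendre_sum_nonneg: "0 \<le> legendre_sum p m"
  unfolding legendre_sum_def using p2 by (intro sum_nonneg) (auto simp: pos_imp_zdiv_nonneg_iff)

lemma legendre_sum_mono: "0 \<le> a \<Longrightarrow> a \<le> b \<Longrightarrow> legendre_sum p a \<le> legendre_sum p b"
  using p2 by (simp add: legendre_sum_upto[of a "nat b"] legendre_sum_upto[of b "nat b"]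
      sum_mono zdiv_mono1)

lemma ilog_mono: "a \<le> b \<Longrightarrow> ilog p a \<le> ilog p b"
  unfolding ilog_def by (rule card_mono) auto

lemma legendre_sum_superadd:
  "0 \<le> a \<Longrightarrow> 0 \<le> b \<Longrightarrow> legendre_sum p a + legendre_sum p b \<le> legendre_sum p (a + b)"
  using p2 by (simp add: legendre_sum_upto[of _ "nat (a + b)"] sum.distrib[symmetric]
      sum_mono zdiv_add_ge)

text \<open>Each carry in the base-\<open>p\<close> addition of \<open>a\<close> and \<open>b\<close>
    happens at a position \<open>i\<close> with \<open>p ^ i \<le> a + b\<close>.\<close>
lemma legendre_sum_add_le:
  assumes "0 \<le> a" "0 \<le> b"
  shows "legendre_sum p (a + b) \<le> legendre_sum p a + legendre_sum p b + int (ilog p (a + b))"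
proof -
  define B where "B = nat (a + b)"
  have "legendre_sum p (a + b) = (\<Sum>i\<in>{1..B}. (a + b) div p ^ i)"
    using legendre_sum_upto[of "a + b" B] assms unfolding B_def by simp
  also have "\<dots> \<le> (\<Sum>i\<in>{1..B}. a div p ^ i + b div p ^ i + (if p ^ i \<le> a + b then 1 else 0))"
    using assms p2 by (intro sum_mono zdiv_add_le) auto
  also have "\<dots> = legendre_sum p a + legendre_sum p b + int (ilog p (a + b))"
    using assms legendre_sum_upto[of a B] legendre_sum_upto[of b B] ilog_upto[of "a + b" B]
    unfolding B_def by (simp add: sum.distrib sum.If_cases Int_def)
  finally show ?thesis .
qed

lemma legendre_sum_mult_self: "0 \<le> N \<Longrightarrow> legendre_sum p (p * N) = N + legendre_sum p N"
  using legendre_sum_div[of "p * N"] p2 by simp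

lemma legendre_sum_le: "0 \<le> m \<Longrightarrow> real_of_int (legendre_sum p m) \<le> m / (p - 1)"
proof (induction "nat m" arbitrary: m rule: less_induct)
  case less
  show ?case
  proof (cases "m < p")
    case True
    thus ?thesis using legendre_sum_less less.prems p2 by simp
  next
    case False
    have q: "0 \<le> m div p" "m div p < m" "m div p * p \<le> m"
      using less.prems p2 False
        by (auto simp: pos_imp_zdiv_nonneg_iff int_div_less_self zle_div_iff_mult_le[symmetric])
    have "real_of_int (legendre_sum p m) \<le> (m div p) + (m div p) / (p - 1)"
      using legendre_sum_div[OF less.prems] less.hyps[of "m div p"] q by simp
    also have "\<dots> = real_of_int (m div p * p) / (p - 1)"
      using p2 by (simp add: field_simps)
    also have "\<dots> \<le> m / (p - 1)"
      using p2 q(3) by (intro divide_right_mono) (simp_all, metis of_int_le_iff of_int_mult)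
    finally show ?thesis .
  qed
qed

lemma legendre_sum_ge:
  "0 \<le> m \<Longrightarrow> (m + 1 - p) / (p - 1) - ilog p m \<le> real_of_int (legendre_sum p m)"
proof (induction "nat m" arbitrary: m rule: less_induct)
  case less
  show ?case
  proof (cases "m < p")
    case True
    thus ?thesis using legendre_sum_less ilog_less less.prems p2 by (simp add: divide_nonpos_pos)
  next
    case False
    define q where "q = m div p"
    have "m = q * p + m mod p" "m mod p < p" "(q + 1) * p = q * p + p"
      using p2 by (simp_all add: q_def distrib_right)
    hence "m + 1 \<le> (q + 1) * p" by linarith
    hence q: "0 \<le> q" "q < m" "m + 1 \<le> (q + 1) * p"
      using less.prems p2 False by (auto simp: q_def pos_imp_zdiv_nonneg_iff int_div_less_self)
    hence "real_of_int m + 1 \<le> (q + 1) * p"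
      by (metis of_int_add of_int_le_iff of_int_mult of_int_1)
    hence "(m + 1 - p) / (p - 1) \<le> ((q + 1) * p - p) / (p - 1)"
      using p2 by (intro divide_right_mono) simp_all
    also have "\<dots> = (q + 1 - p) / (p - 1) + q + 1"
      using p2 by (simp add: field_simps)
    finally have "(m + 1 - p) / (p - 1) \<le> (q + 1 - p) / (p - 1) + q + 1" .
    thus ?thesis
      using less.hyps[of q] q legendre_sum_div[OF less.prems] ilog_div[of m] False
      unfolding q_def by simp
  qed
qed

lemma ilog_Suc_le: "0 \<le> a \<Longrightarrow> ilog p (a + 1) \<le> ilog p a + 1"
proof -
  assume a: "0 \<le> a"
  define S where "S c = {i\<in>{1..nat (a + 1)}. p ^ i \<le> c}" for c
  define E where "E = {i\<in>{1..nat (a + 1)}. p ^ i = a + 1}"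
  have "x = y" if "x \<in> E" "y \<in> E" for x y
    using that power_inject_exp[of p x y] p2 unfolding E_def by simp
  hence "card E \<le> Suc 0" by (subst card_le_Suc0_iff_eq) (auto simp: E_def)
  have "card (S (a + 1)) \<le> card (S a \<union> E)"
    by (rule card_mono) (auto simp: S_def E_def)
  also have "\<dots> \<le> card (S a) + card E" by (rule card_Un_le)
  finally show ?thesis
    using \<open>card E \<le> Suc 0\<close> a ilog_upto[of "a + 1" "nat (a + 1)"] ilog_upto[of a "nat (a + 1)"]
    unfolding S_def by simp
qed

lemma ilog_add_le: "0 \<le> a \<Longrightarrow> ilog p (a + int d) \<le> ilog p a + d"
proof (induction d)
  case (Suc d)
  have "ilog p (a + int (Suc d)) = ilog p ((a + int d) + 1)"
    by (simp add: algebra_simps)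
  also have "\<dots> \<le> ilog p (a + int d) + 1"
    using ilog_Suc_le Suc.prems by simp
  finally show ?case using Suc by simp
qed simp

lemma power_ilog_le: "1 \<le> m \<Longrightarrow> p ^ ilog p m \<le> m"
proof (induction "nat m" arbitrary: m rule: less_induct)
  case less
  show ?case
  proof (cases "m < p")
    case False
    have q: "1 \<le> m div p" "m div p < m" "m div p * p \<le> m"
      using less.prems p2 False zle_div_iff_mult_le[of p 1 m]
      by (auto simp: int_div_less_self zle_div_iff_mult_le[symmetric])
    have "p ^ ilog p m = p ^ ilog p (m div p) * p"
      using ilog_div[of m] False by simp
    also have "\<dots> \<le> m div p * p"
      using less.hyps[of "m div p"] q p2 by (simp add: mult_right_mono)
    finally show ?thesis using q by simp
  qed (use less.prems in \<open>simp add: ilog_less\<close>)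
qed

lemma ilog_le_log: "1 \<le> m \<Longrightarrow> real (ilog p m) \<le> log p m"
proof -
  assume m: "1 \<le> m"
  have "real_of_int p ^ ilog p m \<le> m"
    using power_ilog_le[OF m] by (metis of_int_le_iff of_int_power)
  thus ?thesis
    using p2 m by (simp add: le_log_iff powr_realpow)
qed

lemma legendre_sum_mult_add_ge:
  "0 \<le> N \<Longrightarrow> 0 \<le> X \<Longrightarrow> N + legendre_sum p N + legendre_sum p X \<le> legendre_sum p (p * N + X)"
  using legendre_sum_superadd[of "p * N" X] legendre_sum_mult_self[of N] p2 by simp

lemma legendre_sum_mult_add_le:
  assumes N: "0 \<le> N" and M: "0 \<le> p * N + X"
  shows "real_of_int (legendre_sum p (p * N + X))
    \<le> N + legendre_sum p N + X / (p - 1) + 1 + ilog p (p * N + X) + ilog p (- X)"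
proof (cases "0 \<le> X")
  case True
  have "legendre_sum p (p * N + X) \<le> N + legendre_sum p N + legendre_sum p X + ilog p (p * N + X)"
    using legendre_sum_add_le[of "p * N" X] legendre_sum_mult_self[OF N] N p2 True by simp
  thus ?thesis using legendre_sum_le[OF True] by simp
next
  case False
  have "legendre_sum p (p * N + X) + legendre_sum p (- X) \<le> N + legendre_sum p N"
    using legendre_sum_superadd[OF M, of "- X"] legendre_sum_mult_self[OF N] False by simp
  moreover have "(- X + 1 - p) / (p - 1) = - (X / (p - 1)) - 1"
    using p2 by (simp add: field_simps)
  ultimately show ?thesis
    using legendre_sum_ge[of "- X"] False by simp
qed

lemma legendre_sum_ge_double:
  assumes r: "1 \<le> r" and X: "(p + 1) * r + 1 - p \<le> X"
  shows "r - 1 + 2 * legendre_sum p (r - 1) - int (ilog p (r - 1)) \<le> legendre_sum p X"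
proof -
  have Vr: "legendre_sum p (r - 1) \<le> legendre_sum p r"
    using legendre_sum_mono[of "r - 1" r] r by simp
  consider "p * r + (r - 1) \<le> X" | "p * r \<le> X" "X < p * r + (r - 1)" | "X < p * r"
    by linarith
  thus ?thesis
  proof cases
    case 1
    have "r + legendre_sum p r + legendre_sum p (X - p * r) \<le> legendre_sum p X"
      using legendre_sum_mult_add_ge[of r "X - p * r"] 1 r by simp
    moreover have "legendre_sum p (r - 1) \<le> legendre_sum p (X - p * r)"
      using legendre_sum_mono 1 r by simp
    ultimately show ?thesis using Vr by simp
  next
    case 2
    define c where "c = r - 1 - (X - p * r)"
    have c: "0 \<le> X - p * r" "0 \<le> c" "c < p"
      using 2 X by (auto simp: c_def algebra_simps)
    have "r + legendre_sum p r + legendre_sum p (X - p * r) \<le> legendre_sum p X"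
      using legendre_sum_mult_add_ge[of r "X - p * r"] c r by simp
    moreover have "legendre_sum p (r - 1) \<le> legendre_sum p (X - p * r) + int (ilog p (r - 1))"
      using legendre_sum_add_le[OF c(1,2)] legendre_sum_less[OF c(2,3)] by (simp add: c_def)
    ultimately show ?thesis using Vr by simp
  next
    case 3
    have V0: "legendre_sum p (r - 1) = 0"
      using legendre_sum_less 3 X r by (simp add: algebra_simps)
    have "r - 1 + legendre_sum p (r - 1) + legendre_sum p (X - p * (r - 1))
        \<le> legendre_sum p (p * (r - 1) + (X - p * (r - 1)))"
      using 3 X r by (intro legendre_sum_mult_add_ge) (auto simp: algebra_simps)
    thus ?thesis using V0 legendre_sum_nonneg[of "X - p * (r - 1)"] by simp
  qed
qed

end

lemma legendre_sum_succ:
  fixes p :: int assumes p: "prime p" and m: "0 \<le> m"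
  shows "legendre_sum p (m + 1) = legendre_sum p m + int (multiplicity p (m + 1))"
proof -
  have p2: "2 \<le> p" using p prime_ge_2_int by blast
  define B where "B = nat (m + 1)"
  have "{i\<in>{1..B}. p ^ i dvd m + 1} = {1..multiplicity p (m + 1)}"
    using power_dvd_iff_le_multiplicity[of "m + 1" p] multiplicity_le_nat[OF p2, of "m + 1"] m p
    by (auto simp: B_def not_prime_unit)
  hence "(\<Sum>i\<in>{1..B}. if p ^ i dvd m + 1 then 1 else 0) = int (multiplicity p (m + 1))"
    by (simp add: sum.If_cases Int_def)
  moreover have "legendre_sum p (m + 1)
      = (\<Sum>i\<in>{1..B}. m div p ^ i + (if p ^ i dvd m + 1 then 1 else 0))"
    using legendre_sum_upto[OF p2, of "m + 1" B] zdiv_succ[of "p ^ _" m] m p2 B_def by simp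
  ultimately show ?thesis
    using legendre_sum_upto[OF p2 m, of B] m B_def by (simp add: sum.distrib)
qed

definition weight_sum :: "int \<Rightarrow> int \<Rightarrow> int" where
  "weight_sum p m = (\<Sum>j\<in>{1..m}. 1 + int (multiplicity p j))"

lemma weight_sum_mono: "a \<le> b \<Longrightarrow> weight_sum p a \<le> weight_sum p b"
  unfolding weight_sum_def by (intro sum_mono2) auto

lemma weight_sum_eq:
  fixes p :: int assumes p: "prime p" and m: "0 \<le> m"
  shows "weight_sum p m = m + legendre_sum p m"
proof -
  have "weight_sum p (int n) = int n + legendre_sum p (int n)" for n
  proof (induction n)
    case (Suc n)
    have "{1..int (Suc n)} = insert (int n + 1) {1..int n}" by auto
    hence "weight_sum p (int (Suc n)) = 1 + int (multiplicity p (int n + 1)) + weight_sum p (int n)"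
      unfolding weight_sum_def by simp
    thus ?case using Suc legendre_sum_succ[OF p, of "int n"] by (simp add: add.commute)
  qed (simp add: weight_sum_def legendre_sum_def)
  thus ?thesis using m by (metis nonneg_int_cases)
qed

context
  fixes p :: int
  assumes prime: "prime p"
begin

lemma weight_sum_le: "0 \<le> m \<Longrightarrow> real_of_int (weight_sum p m) \<le> m * p / (p - 1)"
proof -
  assume m: "0 \<le> m"
  have p2: "2 \<le> p" using prime prime_ge_2_int by blast
  have "real_of_int (weight_sum p m) \<le> m + m / (p - 1)"
    using weight_sum_eq[OF prime m] legendre_sum_le[OF p2 m] by simp
  also have "\<dots> = m * p / (p - 1)" using p2 by (simp add: field_simps)
  finally show ?thesis .
qed

lemma weight_sum_ge: "0 \<le> m \<Longrightarrow> m * p / (p - 1) - 1 - ilog p m \<le> real_of_int (weight_sum p m)"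
proof -
  assume m: "0 \<le> m"
  have p2: "2 \<le> p" using prime prime_ge_2_int by blast
  have "m * p / (p - 1) - 1 = m + (m + 1 - p) / (p - 1)" using p2 by (simp add: field_simps)
  thus ?thesis using weight_sum_eq[OF prime m] legendre_sum_ge[OF p2 m] by simp
qed

lemma weight_sum_mult_add_ge:
  assumes "0 \<le> N" "0 \<le> X"
  shows "p * N + X + legendre_sum p X \<le> weight_sum p (p * N + X) - weight_sum p N"
proof -
  have p2: "2 \<le> p" using prime prime_ge_2_int by blast
  thus ?thesis using legendre_sum_mult_add_ge[OF p2 assms] weight_sum_eq[OF prime] assms by simp
qed

lemma weight_sum_mult_add_le:
  assumes N: "0 \<le> N" and M: "0 \<le> p * N + X"
  shows "real_of_int (weight_sum p (p * N + X) - weight_sum p N)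
    \<le> p * N + X + X / (p - 1) + 1 + ilog p (p * N + X) + ilog p (- X)"
proof -
  have p2: "2 \<le> p" using prime prime_ge_2_int by blast
  thus ?thesis using legendre_sum_mult_add_le[OF p2 N M] weight_sum_eq[OF prime] N M by simp
qed

end

section \<open>Sums of valuations over windows\<close>

definition dist_weight :: "int \<Rightarrow> int \<Rightarrow> int \<Rightarrow> int" where
  "dist_weight q K x = 1 + int (multiplicity q (K - x))"

definition window_weight :: "int \<Rightarrow> int \<Rightarrow> int \<Rightarrow> int \<Rightarrow> int" where
  "window_weight q K lo hi = (\<Sum>x | x \<noteq> K \<and> 0 \<le> x \<and> lo \<le> x \<and> x \<le> hi. dist_weight q K x)"

lemma sum_dist_weight_above: "(\<Sum>x\<in>{K + 1..K + m}. dist_weight q K x) = weight_sum q m"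
proof -
  have se: "{K + 1..K + m} = (\<lambda>j. K + j) ` {1..m}"
    by (auto simp: image_iff intro!: bexI[of _ "_ - K"])
  have inj: "inj_on (\<lambda>j. K + j) {1..m}" by (simp add: inj_on_def)
  have "(\<Sum>x\<in>{K + 1..K + m}. dist_weight q K x) = (\<Sum>j\<in>{1..m}. dist_weight q K (K + j))"
    unfolding se sum.reindex[OF inj] by (simp add: comp_def)
  thus ?thesis by (simp add: weight_sum_def dist_weight_def multiplicity_uminus_right)
qed

lemma sum_dist_weight_below: "(\<Sum>x\<in>{K - m..K - 1}. dist_weight q K x) = weight_sum q m"
proof -
  have se: "{K - m..K - 1} = (\<lambda>j. K - j) ` {1..m}"
    by (auto simp: image_iff intro!: bexI[of _ "K - _"])
  have inj: "inj_on (\<lambda>j. K - j) {1..m}" by (simp add: inj_on_def)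
  have "(\<Sum>x\<in>{K - m..K - 1}. dist_weight q K x) = (\<Sum>j\<in>{1..m}. dist_weight q K (K - j))"
    unfolding se sum.reindex[OF inj] by (simp add: comp_def)
  thus ?thesis by (simp add: weight_sum_def dist_weight_def)
qed

lemma window_weight_nonneg: "0 \<le> window_weight q K lo hi"
  unfolding window_weight_def dist_weight_def by (intro sum_nonneg) simp

lemma window_weight_empty: "hi < lo \<Longrightarrow> window_weight q K lo hi = 0"
proof -
  assume "hi < lo"
  hence "{x. x \<noteq> K \<and> 0 \<le> x \<and> lo \<le> x \<and> x \<le> hi} = {}" by auto
  thus ?thesis unfolding window_weight_def by (simp only: sum.empty)
qed

lemma window_weight_mono:
  assumes "A \<subseteq> {x. x \<noteq> K \<and> 0 \<le> x \<and> lo \<le> x \<and> x \<le> hi}" "finite A"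
  shows "(\<Sum>x\<in>A. dist_weight q K x) \<le> window_weight q K lo hi"
  unfolding window_weight_def using assms
  by (intro sum_mono2) (auto simp: dist_weight_def finite_subset[of _ "{lo..hi}"])

lemma window_weight_le:
  assumes "{x. x \<noteq> K \<and> 0 \<le> x \<and> lo \<le> x \<and> x \<le> hi} \<subseteq> A" "finite A"
  shows "window_weight q K lo hi \<le> (\<Sum>x\<in>A. dist_weight q K x)"
  unfolding window_weight_def using assms by (intro sum_mono2) (auto simp: dist_weight_def)

lemma window_weight_right:
  assumes "1 \<le> r" "0 \<le> K" "K + r - 1 \<le> P"
  shows "window_weight q K (K + r) P = weight_sum q (P - K) - weight_sum q (r - 1)"
proof -
  have "{x. x \<noteq> K \<and> 0 \<le> x \<and> K + r \<le> x \<and> x \<le> P} = {K + r..P}"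
    using assms by auto
  moreover have "{K + 1..K + (P - K)} = {K + 1..K + (r - 1)} \<union> {K + r..P}" using assms
    by auto
  ultimately show ?thesis
    using sum_dist_weight_above[where K = K and m = "P - K" and q = q]
      sum_dist_weight_above[where K = K and m = "r - 1" and q = q]
    by (simp add: window_weight_def sum.union_disjoint)
qed

lemma window_weight_across_right:
  assumes "r \<le> 0"
  shows "window_weight q K (K + r) P \<le> weight_sum q (- r) + weight_sum q (P - K)"
proof -
  have "window_weight q K (K + r) P
      \<le> (\<Sum>x\<in>{K - - r..K - 1} \<union> {K + 1..K + (P - K)}. dist_weight q K x)"
    by (rule window_weight_le) auto
  also have "\<dots> = weight_sum q (- r) + weight_sum q (P - K)"
    using sum_dist_weight_below[where K = K and m = "- r" and q = q]
      sum_dist_weight_above[where K = K and m = "P - K" and q = q]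
    by (subst sum.union_disjoint) auto
  finally show ?thesis .
qed

lemma window_weight_left:
  assumes "1 \<le> r" "0 \<le> K" "Q \<le> K"
  shows "window_weight q K Q (K + r - 1) = weight_sum q (K - max Q 0) + weight_sum q (r - 1)"
proof -
  have "{x. x \<noteq> K \<and> 0 \<le> x \<and> Q \<le> x \<and> x \<le> K + r - 1}
      = {K - (K - max Q 0)..K - 1} \<union> {K + 1..K + (r - 1)}" using assms by auto
  thus ?thesis
    using sum_dist_weight_below[where K = K and m = "K - max Q 0" and q = q]
      sum_dist_weight_above[where K = K and m = "r - 1" and q = q]
    by (simp add: window_weight_def sum.union_disjoint)
qed

lemma window_weight_across_left:
  assumes "r \<le> 0"
  shows "weight_sum q (K - max Q 0) - weight_sum q (- r) \<le> window_weight q K Q (K + r - 1)"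
proof (cases "max Q 0 \<le> K + r")
  case True
  have "{K - (K - max Q 0)..K - 1} = {max Q 0..K + r - 1} \<union> {K - - r..K - 1}"
    using assms True by auto
  hence "weight_sum q (K - max Q 0) = (\<Sum>x\<in>{max Q 0..K + r - 1}. dist_weight q K x)
      + weight_sum q (- r)"
    using sum_dist_weight_below[where K = K and m = "K - max Q 0" and q = q]
      sum_dist_weight_below[where K = K and m = "- r" and q = q]
    by (simp add: sum.union_disjoint)
  moreover have "(\<Sum>x\<in>{max Q 0..K + r - 1}. dist_weight q K x) \<le> window_weight q K Q (K + r - 1)"
    using assms by (intro window_weight_mono) auto
  ultimately show ?thesis by simp
next
  case False
  hence "weight_sum q (K - max Q 0) \<le> weight_sum q (- r)" by (intro weight_sum_mono) linarith
  thus ?thesis using window_weight_nonneg[of q K Q "K + r - 1"] by simp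
qed

lemma window_weight_nat:
  assumes "hi < int B"
  shows "window_weight q (int k) lo hi
    = (\<Sum>k'\<in>{k'\<in>{..<B} - {k}. lo \<le> int k' \<and> int k' \<le> hi}. dist_weight q (int k) (int k'))"
proof -
  have "{x. x \<noteq> int k \<and> 0 \<le> x \<and> lo \<le> x \<and> x \<le> hi}
      = int ` {k'\<in>{..<B} - {k}. lo \<le> int k' \<and> int k' \<le> hi}"
  proof (intro set_eqI iffI)
    fix x assume x: "x \<in> {x. x \<noteq> int k \<and> 0 \<le> x \<and> lo \<le> x \<and> x \<le> hi}"
    hence "nat x \<in> {k'\<in>{..<B} - {k}. lo \<le> int k' \<and> int k' \<le> hi}" "x = int (nat x)"
      using assms by auto
    thus "x \<in> int ` {k'\<in>{..<B} - {k}. lo \<le> int k' \<and> int k' \<le> hi}" by blast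
  qed auto
  thus ?thesis unfolding window_weight_def by (simp add: sum.reindex inj_on_def)
qed

section \<open>Lower convex hulls of integer-indexed points\<close>

definition int_graph :: "int \<Rightarrow> (int \<Rightarrow> real) \<Rightarrow> (real \<times> real) set" where
  "int_graph L D = {(real_of_int l, D l) | l. \<bar>l\<bar> \<le> L}"

definition below_graph :: "int \<Rightarrow> (int \<Rightarrow> real) \<Rightarrow> real \<Rightarrow> real \<Rightarrow> bool" where
  "below_graph L D \<alpha> \<beta> \<longleftrightarrow> (\<forall>l. \<bar>l\<bar> \<le> L \<longrightarrow> \<alpha> + \<beta> * real_of_int l \<le> D l)"

lemma below_graph_hull:
  assumes "below_graph L D \<alpha> \<beta>" and "z \<in> convex hull (int_graph L D)"
  shows "\<alpha> + \<beta> * fst z \<le> snd z"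
proof -
  have "{z. \<alpha> + \<beta> * fst z \<le> snd z} = {z :: real \<times> real. inner (\<beta>, -1) z \<le> - \<alpha>}"
    by (auto simp: inner_prod_def)
  hence "convex {z. \<alpha> + \<beta> * fst z \<le> snd z}" by (simp add: convex_halfspace_le)
  moreover have "int_graph L D \<subseteq> {z. \<alpha> + \<beta> * fst z \<le> snd z}"
    using assms(1) unfolding int_graph_def below_graph_def by auto
  ultimately show ?thesis using assms(2) hull_minimal[of "int_graph L D" _ convex] by blast
qed

lemma int_graph_in_hull: "\<bar>l\<bar> \<le> L \<Longrightarrow> (real_of_int l, D l) \<in> convex hull (int_graph L D)"
  by (rule hull_inc) (auto simp: int_graph_def)

lemma lower_hull_val_le:
  assumes "(x, y) \<in> convex hull (int_graph L D)"
  shows "lower_hull_val (int_graph L D) x \<le> y"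
proof -
  define \<alpha> where "\<alpha> = Min (D ` {-L..L})"
  have "below_graph L D \<alpha> 0"
    unfolding below_graph_def \<alpha>_def
  proof (intro allI impI)
    fix l assume "\<bar>l\<bar> \<le> L"
    hence "D l \<in> D ` {-L..L}" by (simp add: abs_le_iff)
    thus "Min (D ` {-L..L}) + 0 * real_of_int l \<le> D l" by simp
  qed
  hence "bdd_below {y. (x, y) \<in> convex hull (int_graph L D)}"
    using below_graph_hull by (intro bdd_belowI[of _ \<alpha>]) force
  thus ?thesis unfolding lower_hull_val_def using assms by (intro cInf_lower) auto
qed

lemma lower_hull_val_ge:
  assumes "below_graph L D \<alpha> \<beta>" and "\<bar>l\<bar> \<le> L"
  shows "\<alpha> + \<beta> * real_of_int l \<le> lower_hull_val (int_graph L D) l"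
  unfolding lower_hull_val_def
proof (rule cInf_greatest)
  show "{y. (real_of_int l, y) \<in> convex hull (int_graph L D)} \<noteq> {}"
    using int_graph_in_hull[OF assms(2)] by auto
qed (use below_graph_hull[OF assms(1)] in force)

lemma secant_in_hull:
  assumes "i < j" "i \<le> x" "x \<le> j" "\<bar>i\<bar> \<le> L" "\<bar>j\<bar> \<le> L"
  shows "(real_of_int x, (D i * (j - x) + D j * (x - i)) / (j - i)) \<in> convex hull (int_graph L D)"
proof -
  define \<theta> where "\<theta> = real_of_int (j - x) / (j - i)"
  have \<theta>: "0 \<le> \<theta>" "\<theta> \<le> 1" using assms unfolding \<theta>_def
    by (auto simp: divide_simps)
  have mem: "\<theta> *\<^sub>R (real_of_int i, D i) + (1 - \<theta>) *\<^sub>R (real_of_int j, D j)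
      \<in> convex hull (int_graph L D)"
    using \<theta> int_graph_in_hull[OF assms(4)] int_graph_in_hull[OF assms(5)]
    by (intro convexD[OF convex_convex_hull]) auto
  have \<theta>': "1 - \<theta> = real_of_int (x - i) / (j - i)"
    using assms(1) unfolding \<theta>_def by (simp add: diff_divide_eq_iff)
  have "\<theta> * i + (1 - \<theta>) * j = (i * (j - x) + j * (x - i)) / real_of_int (j - i)"
    unfolding \<theta>' by (simp add: \<theta>_def add_divide_distrib mult.commute)
  also have "i * (j - x) + j * (x - i) = real_of_int x * (j - i)"
    by (simp add: algebra_simps)
  finally have xcomp: "\<theta> * i + (1 - \<theta>) * j = x" using assms(1) by simp
  have dcomp: "\<theta> * D i + (1 - \<theta>) * D j = (D i * (j - x) + D j * (x - i)) / (j - i)"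
    unfolding \<theta>' by (simp add: \<theta>_def add_divide_distrib mult.commute)
  have "\<theta> *\<^sub>R (real_of_int i, D i) + (1 - \<theta>) *\<^sub>R (real_of_int j, D j)
      = (real_of_int x, (D i * (j - x) + D j * (x - i)) / (j - i))"
    using xcomp dcomp by simp
  thus ?thesis using mem by simp
qed

lemma separating_value:
  fixes A B :: "real set"
  assumes "finite A" "finite B" "\<And>a b. a \<in> A \<Longrightarrow> b \<in> B \<Longrightarrow> a \<le> b"
  obtains c where "\<And>a. a \<in> A \<Longrightarrow> a \<le> c" "\<And>b. b \<in> B \<Longrightarrow> c \<le> b"
proof
  define c where "c = (if A = {} then (if B = {} then 0 else Min B) else Max A)"
  show "a \<le> c" if "a \<in> A" for a using that assms unfolding c_def by auto
  show "c \<le> b" if "b \<in> B" for b using that assms unfolding c_def by auto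
qed

text \<open>The value of the lower hull at an integer point is the least secant value across it, and
  the minimality of that secant puts every slope from the left below every slope to the right.\<close>
lemma min_secant:
  assumes x0: "\<bar>x0\<bar> \<le> L"
  shows "\<exists>m. (real_of_int x0, m) \<in> convex hull (int_graph L D) \<and> m \<le> D x0 \<and>
    (\<forall>i j. - L \<le> i \<and> i < x0 \<and> x0 < j \<and> j \<le> L \<longrightarrow>
      (m - D i) / real_of_int (x0 - i) \<le> (D j - m) / real_of_int (j - x0))"
proof -
  define PR where "PR = {-L..x0} \<times> {x0..L}"
  define sec where "sec = (\<lambda>(i, j). if i = j then D x0
     else (D i * real_of_int (j - x0) + D j * real_of_int (x0 - i)) / real_of_int (j - i))"
  define m where "m = Min (sec ` PR)"
  have PR: "finite PR" "(x0, x0) \<in> PR" using x0 unfolding PR_def by auto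
  have m_le: "m \<le> sec ij" if "ij \<in> PR" for ij
    unfolding m_def using PR that by (intro Min_le) auto
  have "m \<in> sec ` PR" unfolding m_def using PR by (intro Min_in) auto
  then obtain i0 j0 where ij0: "(i0, j0) \<in> PR" "sec (i0, j0) = m" by auto
  have "(real_of_int x0, m) \<in> convex hull (int_graph L D)"
  proof (cases "i0 = j0")
    case True
    thus ?thesis using ij0 int_graph_in_hull[OF x0] unfolding PR_def sec_def by auto
  next
    case False
    thus ?thesis
      using ij0 secant_in_hull[of i0 j0 x0 L D] unfolding PR_def sec_def by auto
  qed
  moreover have "m \<le> D x0" using m_le[OF PR(2)] by (simp add: sec_def)
  moreover have "(m - D i) / real_of_int (x0 - i) \<le> (D j - m) / real_of_int (j - x0)"
    if ij: "- L \<le> i" "i < x0" "x0 < j" "j \<le> L" for i j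
  proof -
    have "m \<le> sec (i, j)" using ij by (intro m_le) (auto simp: PR_def)
    hence "m * real_of_int (j - i) \<le> D i * real_of_int (j - x0) + D j * real_of_int (x0 - i)"
      using ij by (simp add: sec_def pos_le_divide_eq)
    hence "(m - D i) * real_of_int (j - x0) \<le> (D j - m) * real_of_int (x0 - i)"
      by (simp add: algebra_simps)
    thus ?thesis using ij by (simp add: divide_simps mult.commute)
  qed
  ultimately show ?thesis by blast
qed

lemma lower_hull_supporting_line:
  assumes x0: "\<bar>x0\<bar> \<le> L"
  obtains \<beta> :: real
  where "below_graph L D (lower_hull_val (int_graph L D) x0 - \<beta> * real_of_int x0) \<beta>"
proof -
  from min_secant[where D = D, OF x0] obtain m
    where hull: "(real_of_int x0, m) \<in> convex hull (int_graph L D)" and mD: "m \<le> D x0"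
    and slopes: "\<forall>i j. - L \<le> i \<and> i < x0 \<and> x0 < j \<and> j \<le> L \<longrightarrow>
      (m - D i) / real_of_int (x0 - i) \<le> (D j - m) / real_of_int (j - x0)"
    by blast
  define LS where "LS = (\<lambda>i. (m - D i) / real_of_int (x0 - i)) ` {-L..x0 - 1}"
  define RS where "RS = (\<lambda>j. (D j - m) / real_of_int (j - x0)) ` {x0 + 1..L}"
  have "a \<le> b" if "a \<in> LS" "b \<in> RS" for a b
    using that slopes unfolding LS_def RS_def by auto
  then obtain \<beta> where \<beta>: "\<And>a. a \<in> LS \<Longrightarrow> a \<le> \<beta>" "\<And>b. b \<in> RS \<Longrightarrow> \<beta> \<le> b"
    using separating_value[of LS RS] unfolding LS_def RS_def by blast
  have line: "below_graph L D (m - \<beta> * x0) \<beta>"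
    unfolding below_graph_def
  proof (intro allI impI)
    fix l assume l: "\<bar>l\<bar> \<le> L"
    consider "l < x0" | "l = x0" | "x0 < l" by linarith
    thus "m - \<beta> * x0 + \<beta> * l \<le> D l"
    proof cases
      case 1
      hence "(m - D l) / real_of_int (x0 - l) \<le> \<beta>" using l
        by (intro \<beta>(1)) (auto simp: LS_def)
      thus ?thesis using 1 by (simp add: divide_le_eq algebra_simps)
    next
      case 3
      hence "\<beta> \<le> (D l - m) / real_of_int (l - x0)" using l
        by (intro \<beta>(2)) (auto simp: RS_def)
      thus ?thesis using 3 by (simp add: le_divide_eq algebra_simps)
    qed (use mD in simp)
  qed
  have "m \<le> lower_hull_val (int_graph L D) x0"
    using lower_hull_val_ge[OF line x0] by simp
  hence "lower_hull_val (int_graph L D) x0 = m" using lower_hull_val_le[OF hull] by simp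
  thus ?thesis using that line by simp
qed

lemma telescope_ge:
  fixes D :: "int \<Rightarrow> real"
  assumes "a \<le> b" and "\<And>r. a < r \<Longrightarrow> r \<le> b \<Longrightarrow> \<beta> \<le> D r - D (r - 1)"
  shows "\<beta> * real_of_int (b - a) \<le> D b - D a"
  using assms
proof (induction b rule: int_ge_induct)
  case (step i)
  have "\<beta> * real_of_int (i - a) \<le> D i - D a" using step by auto
  moreover have "\<beta> \<le> D (i + 1) - D i" using step.prems[of "i + 1"] step.hyps by simp
  ultimately show ?case by (simp add: algebra_simps)
qed simp

lemma lower_hull_diff_ge:
  assumes l: "- L < l" "l \<le> L" and incr: "\<And>r. l \<le> r \<Longrightarrow> r \<le> L \<Longrightarrow> \<beta> \<le> D r - D (r - 1)"
  shows "\<beta> \<le> lower_hull_val (int_graph L D) l - lower_hull_val (int_graph L D) (l - 1)"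
proof -
  let ?h = "\<lambda>x. lower_hull_val (int_graph L D) (real_of_int x)"
  have l1: "\<bar>l - 1\<bar> \<le> L" "\<bar>l\<bar> \<le> L" using l by auto
  obtain \<beta>0 where \<beta>0: "below_graph L D (?h (l - 1) - \<beta>0 * real_of_int (l - 1)) \<beta>0"
    using lower_hull_supporting_line[OF l1(1)] by blast
  define b where "b = max \<beta>0 \<beta>"
  have "below_graph L D (?h (l - 1) - b * real_of_int (l - 1)) b"
    unfolding below_graph_def
  proof (intro allI impI)
    fix x assume x: "\<bar>x\<bar> \<le> L"
    have line0: "?h (l - 1) + \<beta>0 * real_of_int (x - (l - 1)) \<le> D x"
      using \<beta>0 x unfolding below_graph_def by (simp add: algebra_simps)
    have eq: "?h (l - 1) - b * real_of_int (l - 1) + b * real_of_int x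
        = ?h (l - 1) + b * real_of_int (x - (l - 1))"
      by (simp add: algebra_simps)
    show "?h (l - 1) - b * real_of_int (l - 1) + b * real_of_int x \<le> D x"
    proof (cases "x \<le> l - 1")
      case True
      have "b * real_of_int (x - (l - 1)) \<le> \<beta>0 * real_of_int (x - (l - 1))"
        using True unfolding b_def by (intro mult_right_mono_neg) auto
      thus ?thesis using line0 eq by linarith
    next
      case False
      have tel: "\<beta> * real_of_int (x - (l - 1)) \<le> D x - D (l - 1)"
      proof (rule telescope_ge)
        fix r assume "l - 1 < r" "r \<le> x"
        thus "\<beta> \<le> D r - D (r - 1)" using x by (intro incr) auto
      qed (use False in simp)
      have "?h (l - 1) \<le> D (l - 1)" using lower_hull_val_le[OF int_graph_in_hull[OF l1(1)]] .
      moreover have "b = \<beta>0 \<or> b = \<beta>" unfolding b_def by linarith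
      ultimately show ?thesis using line0 eq tel by auto
    qed
  qed
  from lower_hull_val_ge[OF this l1(2)] show ?thesis unfolding b_def by (simp add: algebra_simps)
qed

lemma lower_hull_diff_le:
  assumes l: "- L < l" "l \<le> L" and incr: "\<And>r. - L < r \<Longrightarrow> r \<le> l \<Longrightarrow> D r - D (r - 1) \<le> \<gamma>"
  shows "lower_hull_val (int_graph L D) l - lower_hull_val (int_graph L D) (l - 1) \<le> \<gamma>"
proof -
  let ?h = "\<lambda>x. lower_hull_val (int_graph L D) (real_of_int x)"
  have l1: "\<bar>l - 1\<bar> \<le> L" "\<bar>l\<bar> \<le> L" using l by auto
  obtain \<beta>0 where \<beta>0: "below_graph L D (?h l - \<beta>0 * real_of_int l) \<beta>0"
    using lower_hull_supporting_line[OF l1(2)] by blast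
  define b where "b = min \<beta>0 \<gamma>"
  have "below_graph L D (?h l - b * real_of_int l) b"
    unfolding below_graph_def
  proof (intro allI impI)
    fix x assume x: "\<bar>x\<bar> \<le> L"
    have line0: "?h l + \<beta>0 * real_of_int (x - l) \<le> D x"
      using \<beta>0 x unfolding below_graph_def by (simp add: algebra_simps)
    have eq: "?h l - b * real_of_int l + b * real_of_int x = ?h l - b * real_of_int (l - x)"
      by (simp add: algebra_simps)
    show "?h l - b * real_of_int l + b * real_of_int x \<le> D x"
    proof (cases "l \<le> x")
      case True
      have "b * real_of_int (x - l) \<le> \<beta>0 * real_of_int (x - l)"
        using True unfolding b_def by (intro mult_right_mono) auto
      thus ?thesis using line0 eq by (simp add: algebra_simps)
    next
      case False
      have tel: "- \<gamma> * real_of_int (l - x) \<le> - D l - - D x"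
      proof (rule telescope_ge[where D = "\<lambda>r. - D r"])
        fix r assume "x < r" "r \<le> l"
        hence "D r - D (r - 1) \<le> \<gamma>" using x by (intro incr) auto
        thus "- \<gamma> \<le> - D r - - D (r - 1)" by simp
      qed (use False in simp)
      have "?h l \<le> D l" using lower_hull_val_le[OF int_graph_in_hull[OF l1(2)]] .
      moreover have "b = \<beta>0 \<or> b = \<gamma>" unfolding b_def by linarith
      ultimately show ?thesis using line0 eq tel by (auto simp: algebra_simps)
    qed
  qed
  from lower_hull_val_ge[OF this l1(1)] show ?thesis unfolding b_def by (simp add: algebra_simps)
qed

lemma log_squared_le:
  fixes p l :: real
  assumes p: "3 \<le> p" and l: "1 \<le> l"
  shows "(log p l)\<^sup>2 \<le> (p + 1) * (l - 1)"
proof -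
  have "exp 1 \<le> p" using exp_le p by linarith
  hence "ln (exp 1) \<le> ln p" using p by (subst ln_le_cancel_iff) auto
  hence "1 \<le> ln p" by simp
  hence "log p l \<le> ln l" "0 \<le> log p l"
    using l p by (simp_all add: log_def divide_le_eq mult_le_cancel_left1)
  moreover have "ln l \<le> 2 * (sqrt l - 1)"
    using ln_le_minus_one[of "sqrt l"] ln_sqrt[of l] l by simp
  ultimately have "(log p l)\<^sup>2 \<le> (2 * (sqrt l - 1))\<^sup>2" by (intro power_mono) auto
  also have "\<dots> = 4 * (l - 1) - 8 * (sqrt l - 1)" using l
    by (simp add: power2_eq_square algebra_simps)
  also have "\<dots> \<le> 4 * (l - 1)" using l by simp
  also have "\<dots> \<le> (p + 1) * (l - 1)" using l p by (intro mult_right_mono) auto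
  finally show ?thesis .
qed

lemma scaled_linear_ge_neg_square:
  fixes b x t :: real
  assumes "0 < b" "b \<le> 3" "t \<le> x"
  shows "- x\<^sup>2 \<le> b * (3 - 2 * t)"
proof -
  have "b * (3 - 2 * x) \<le> b * (3 - 2 * t)" using assms by (intro mult_left_mono) auto
  moreover have "b * (3 - 2 * x) + x\<^sup>2 = (x - b)\<^sup>2 + b * (3 - b)"
    by (simp add: power2_eq_square algebra_simps)
  moreover have "0 \<le> b * (3 - b)" using assms by simp
  ultimately show ?thesis by (smt (verit) zero_le_power2)
qed

lemma affine_le_square:
  fixes A B y y0 :: real
  assumes "0 < y0" "y0 \<le> y" "0 \<le> A" "0 \<le> B"
  shows "A + B * y \<le> (A / y0\<^sup>2 + B / y0) * y\<^sup>2"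
proof -
  have "y0\<^sup>2 \<le> y\<^sup>2" using assms by (intro power_mono) auto
  hence "A \<le> A / y0\<^sup>2 * y\<^sup>2" using assms by (simp add: field_simps mult_left_mono)
  moreover have "B * y * y0 \<le> B * y * y" using assms by (intro mult_left_mono) auto
  hence "B * y \<le> B / y0 * y\<^sup>2" using assms by (simp add: field_simps power2_eq_square)
  ultimately show ?thesis by (simp add: distrib_right)
qed

lemma slope_frac_pos:
  fixes P X r :: real
  assumes "7 \<le> P" "X \<le> (P + 1) * r + 2 * P"
  shows "2 * (X / (P - 1)) - 4 * ((r - 1) * P / (P - 1)) \<le> 10 - 2 * r"
proof -
  have "2 * X - 4 * (r - 1) * P \<le> (10 - 2 * r) * (P - 1)"
    using assms by (simp add: algebra_simps)
  hence "(2 * X - 4 * (r - 1) * P) / (P - 1) \<le> 10 - 2 * r"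
    using assms(1) by (simp add: pos_divide_le_eq)
  moreover have "2 * (X / (P - 1)) - 4 * ((r - 1) * P / (P - 1))
      = (2 * X - 4 * (r - 1) * P) / (P - 1)"
    by (simp add: diff_divide_distrib)
  ultimately show ?thesis by simp
qed

lemma slope_frac_nonpos:
  fixes P X r :: real
  assumes "7 \<le> P" "X \<le> (P + 1) * r + 2 * P"
  shows "2 * (X / (P - 1)) + 4 * (- r * P / (P - 1)) \<le> 5 - 2 * r"
proof -
  have "2 * X - 4 * r * P \<le> (5 - 2 * r) * (P - 1)"
    using assms by (simp add: algebra_simps)
  hence "(2 * X - 4 * r * P) / (P - 1) \<le> 5 - 2 * r"
    using assms(1) by (simp add: pos_divide_le_eq)
  moreover have "2 * (X / (P - 1)) + 4 * (- r * P / (P - 1)) = (2 * X - 4 * r * P) / (P - 1)"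
    by (simp add: diff_divide_distrib)
  ultimately show ?thesis by simp
qed

section \<open>The dimension formulas\<close>

locale dimension_setting =
  fixes p a s :: nat
  assumes prime_p: "prime p" and p_ge_7: "7 \<le> p" and a_ge_1: "1 \<le> a" and a_le: "a \<le> p - 4"
    and s_le: "s \<le> p - 2"
begin

abbreviation "\<delta> \<equiv> delta_eps p a s"
abbreviation "t\<^sub>1 \<equiv> t1 p a s"
abbreviation "t\<^sub>2 \<equiv> t2 p a s"
abbreviation "tgap \<equiv> t\<^sub>2 - t\<^sub>1"
abbreviation "k\<^sub>\<epsilon> \<equiv> k_eps p a s"

lemma p_bounds: "int s \<le> int p - 2" "int a \<le> int p - 4" "1 \<le> int a" "7 \<le> int p"
  using s_le a_le a_ge_1 p_ge_7 by linarith+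

lemma prime_int_p: "prime (int p)"
  using prime_p by simp

lemma delta_eps_residue:
  defines "r \<equiv> resid p (int a + int s)"
  shows "0 \<le> r" "r < int p - 1" "\<delta> * (int p - 1) \<le> r + int s" "r + int s < (\<delta> + 1) * (int p - 1)"
    "\<delta> = 0 \<or> \<delta> = 1" "k\<^sub>\<epsilon> = 2 + r + int s - \<delta> * (int p - 1)"
proof -
  have P1: "int p - 1 > 0" using p_ge_7 by simp
  show r0: "0 \<le> r" "r < int p - 1" unfolding r_def resid_def using P1 by simp_all
  have dldef: "\<delta> = (int s + r) div (int p - 1)" unfolding delta_eps_def r_def by simp
  have e: "(int s + r) div (int p - 1) * (int p - 1) + (int s + r) mod (int p - 1) = int s + r"
    by (rule div_mult_mod_eq)
  have m: "0 \<le> (int s + r) mod (int p - 1)" "(int s + r) mod (int p - 1) < int p - 1" using P1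
    by simp_all
  show d1: "\<delta> * (int p - 1) \<le> r + int s" "r + int s < (\<delta> + 1) * (int p - 1)"
    using e m dldef by (simp_all add: algebra_simps)
  have "\<delta> \<ge> 0" using dldef r0 P1 by (simp add: pos_imp_zdiv_nonneg_iff)
  moreover have "\<delta> < 2"
  proof -
    have "r + int s < 2 * (int p - 1)" using r0(2) p_bounds(1) by (simp add: algebra_simps)
    hence "\<delta> * (int p - 1) < 2 * (int p - 1)" using d1 by linarith
    thus ?thesis using P1 mult_right_less_imp_less[of \<delta> "int p - 1" 2] by linarith
  qed
  ultimately show "\<delta> = 0 \<or> \<delta> = 1" by linarith
  have "k\<^sub>\<epsilon> = 2 + (int a + 2 * int s) mod (int p - 1)" unfolding k_eps_def resid_def
    by simp
  also have "(int a + 2 * int s) mod (int p - 1) = (r + int s) mod (int p - 1)"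
  proof -
    have "int a + 2 * int s = (int a + int s) + int s" by simp
    hence "(int a + 2 * int s) mod (int p - 1)
        = ((int a + int s) mod (int p - 1) + int s) mod (int p - 1)"
      by (metis mod_add_left_eq)
    thus ?thesis unfolding r_def resid_def by simp
  qed
  also have "(r + int s) mod (int p - 1) = r + int s - \<delta> * (int p - 1)"
    using e dldef by (simp add: algebra_simps)
  finally show "k\<^sub>\<epsilon> = 2 + r + int s - \<delta> * (int p - 1)" by simp
qed

lemma t_residue_cases:
  defines "r \<equiv> resid p (int a + int s)"
  shows "(int a + int s < int p - 1 \<and> r = int a + int s
      \<and> t\<^sub>1 = int s + \<delta> \<and> t\<^sub>2 = int a + int s + \<delta> + 2) \<or>
     (int a + int s \<ge> int p - 1 \<and> r = int a + int s - (int p - 1)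
         \<and> t\<^sub>1 = r + \<delta> + 1 \<and> t\<^sub>2 = int a + int s + \<delta> + 1)"
proof (cases "a + s < p - 1")
  case True
  hence lt: "int a + int s < int p - 1" by linarith
  hence "r = int a + int s" unfolding r_def resid_def by simp
  thus ?thesis using True lt unfolding t1_def t2_def r_def by simp
next
  case False
  hence ge: "int a + int s \<ge> int p - 1" using p_ge_7 by linarith
  have lt2: "int a + int s - (int p - 1) < int p - 1" using p_bounds by linarith
  have "(int a + int s) mod (int p - 1)
      = ((int a + int s - (int p - 1)) + (int p - 1)) mod (int p - 1)"
    by simp
  also have "\<dots> = (int a + int s - (int p - 1)) mod (int p - 1)" by (rule mod_add_self2)
  also have "\<dots> = int a + int s - (int p - 1)" using ge lt2
    by (intro mod_pos_pos_trivial) linarith+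
  finally have "r = int a + int s - (int p - 1)" unfolding r_def resid_def .
  thus ?thesis using False ge unfolding t1_def t2_def r_def by simp
qed

lemma param_bounds: "0 \<le> t\<^sub>1" "t\<^sub>1 \<le> int p - 2" "3 \<le> tgap" "tgap \<le> int p - 1" "0 \<le> \<delta>" "\<delta> \<le> 1"
  using delta_eps_residue t_residue_cases p_bounds by auto

lemma k_eps_bounds: "2 \<le> k\<^sub>\<epsilon>" "k\<^sub>\<epsilon> \<le> int p"
  using delta_eps_residue(3,4,6) by (simp_all add: algebra_simps)

lemma param_cases:
  "(t\<^sub>1 = int s + \<delta> \<and> tgap = int a + 2 \<and> k\<^sub>\<epsilon> = 2 + int a + 2 * int s - \<delta> * (int p - 1)) \<or>
   (t\<^sub>1 = int a + int s - int p + 2 + \<delta> \<and> tgap = int p - 1 \<and>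
    k\<^sub>\<epsilon> = 2 + int a + 2 * int s - (\<delta> + 1) * (int p - 1))"
  using delta_eps_residue t_residue_cases by (auto simp: algebra_simps)

definition dur :: "int \<Rightarrow> int" where
  "dur x = (let q = (x - t\<^sub>1) div (int p + 1) in
      2 * q + 1 + (if x - (int p + 1) * q \<ge> t\<^sub>2 then 1 else 0))"

lemma d_ur_eq: "d_ur p a s kb = dur (int kb)"
  by (simp add: d_ur_def dur_def Let_def)

lemma dur_eval: assumes "0 \<le> \<rho>" "\<rho> \<le> int p"
  shows "dur (t\<^sub>1 + (int p + 1) * q + \<rho>) = 2 * q + 1 + (if \<rho> \<ge> tgap then 1 else 0)"
proof -
  have "(t\<^sub>1 + (int p + 1) * q + \<rho> - t\<^sub>1) div (int p + 1) = (\<rho> + (int p + 1) * q) div (int p + 1)"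
    by (simp add: algebra_simps)
  also have "\<dots> = \<rho> div (int p + 1) + q" using p_bounds by simp
  also have "\<rho> div (int p + 1) = 0" using assms by simp
  finally have q: "(t\<^sub>1 + (int p + 1) * q + \<rho> - t\<^sub>1) div (int p + 1) = q" by simp
  show ?thesis unfolding dur_def Let_def q by auto
qed

lemma dur_floor_sum: "dur x = (x - t\<^sub>1) div (int p + 1)
    + (x - t\<^sub>1 + int p + 1 - tgap) div (int p + 1) + 1"
proof -
  define q where "q = (x - t\<^sub>1) div (int p + 1)"
  define \<rho> where "\<rho> = (x - t\<^sub>1) mod (int p + 1)"
  have P: "int p + 1 > 0" using p_bounds by simp
  have r: "0 \<le> \<rho>" "\<rho> \<le> int p" using P unfolding \<rho>_def
    by (simp_all add: pos_mod_sign) (use pos_mod_bound[OF P, of "x - t\<^sub>1"] in linarith)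
  have "(int p + 1) * q + \<rho> = x - t\<^sub>1" unfolding q_def \<rho>_def
    by (metis mult.commute div_mult_mod_eq)
  hence x: "x = t\<^sub>1 + (int p + 1) * q + \<rho>" by linarith
  have "(x - t\<^sub>1 + int p + 1 - tgap) div (int p + 1)
      = ((\<rho> + int p + 1 - tgap) + (int p + 1) * q) div (int p + 1)"
    unfolding x by (simp add: algebra_simps)
  also have "\<dots> = (\<rho> + int p + 1 - tgap) div (int p + 1) + q" using P by simp
  also have "(\<rho> + int p + 1 - tgap) div (int p + 1) = (if \<rho> \<ge> tgap then 1 else 0)"
  proof (cases "\<rho> \<ge> tgap")
    case True
    have "(\<rho> + int p + 1 - tgap) div (int p + 1) = ((\<rho> - tgap) + 1 * (int p + 1)) div (int p + 1)"
      by (simp add: algebra_simps)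
    also have "\<dots> = (\<rho> - tgap) div (int p + 1) + 1" using P by (simp only: div_mult_self1)
    also have "(\<rho> - tgap) div (int p + 1) = 0" using True r param_bounds
      by (intro div_pos_pos_trivial) linarith+
    finally show ?thesis using True by simp
  next
    case False
    have "(\<rho> + int p + 1 - tgap) div (int p + 1) = 0" using False r param_bounds
      by (intro div_pos_pos_trivial) linarith+
    thus ?thesis using False by simp
  qed
  finally have e: "(x - t\<^sub>1 + int p + 1 - tgap) div (int p + 1) = (if \<rho> \<ge> tgap then 1 else 0) + q" .
  have "dur x = 2 * q + 1 + (if \<rho> \<ge> tgap then 1 else 0)" using dur_eval[OF r, of q] x
    by simp
  thus ?thesis using e q_def by simp
qed

lemma dur_mono: "x \<le> y \<Longrightarrow> dur x \<le> dur y"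
proof -
  assume xy: "x \<le> y"
  have P: "int p + 1 > 0" using p_bounds by simp
  have "(x - t\<^sub>1) div (int p + 1) \<le> (y - t\<^sub>1) div (int p + 1)" using xy P
    by (intro zdiv_mono1) auto
  moreover have "(x - t\<^sub>1 + int p + 1 - tgap) div (int p + 1)
      \<le> (y - t\<^sub>1 + int p + 1 - tgap) div (int p + 1)"
    using xy P by (intro zdiv_mono1) auto
  ultimately show ?thesis unfolding dur_floor_sum[of x] dur_floor_sum[of y] by simp
qed

lemma dur_ge_floor: "dur x \<ge> 2 * ((x - t\<^sub>1) div (int p + 1)) + 1"
  unfolding dur_def Let_def by simp

lemma dur_ge_neg1: "0 \<le> x \<Longrightarrow> -1 \<le> dur x"
proof -
  assume x: "0 \<le> x"
  have "(-1) * (int p + 1) \<le> x - t\<^sub>1" using x param_bounds by simp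
  hence "-1 \<le> (x - t\<^sub>1) div (int p + 1)"
    using zle_div_iff_mult_le[of "int p + 1" "-1" "x - t\<^sub>1"] by simp
  thus ?thesis using dur_ge_floor[of x] by linarith
qed

definition dual_dur :: "int \<Rightarrow> int" where "dual_dur x = 2 * x - dur x"

lemma dual_dur_eval: assumes "0 \<le> \<rho>" "\<rho> \<le> int p"
  shows "dual_dur (t\<^sub>1 + (int p + 1) * q + \<rho>)
      = 2 * t\<^sub>1 + 2 * int p * q - 1 + 2 * \<rho> - (if \<rho> \<ge> tgap then 1 else 0)"
  unfolding dual_dur_def dur_eval[OF assms] by (simp add: algebra_simps)

lemma dual_dur_mono: "x \<le> y \<Longrightarrow> dual_dur x \<le> dual_dur y"
proof -
  assume xy: "x \<le> y"
  have P: "int p + 1 \<ge> 1" using p_bounds by simp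
  have "(y - t\<^sub>1) div (int p + 1) \<le> (x - t\<^sub>1) div (int p + 1) + (y - x)"
    using zdiv_add_le_self[of "y - x" "int p + 1" "x - t\<^sub>1"] xy P by simp
  moreover have "(y - t\<^sub>1 + int p + 1 - tgap) div (int p + 1)
      \<le> (x - t\<^sub>1 + int p + 1 - tgap) div (int p + 1) + (y - x)"
    using zdiv_add_le_self[of "y - x" "int p + 1" "x - t\<^sub>1 + int p + 1 - tgap"] xy P
      by (simp add: algebra_simps)
  ultimately show ?thesis unfolding dual_dur_def dur_floor_sum[of x] dur_floor_sum[of y] by simp
qed

text \<open>\<open>plus_end n\<close> is the largest \<open>x\<close> with \<open>dur x < n\<close> and \<open>minus_start n\<close> the least \<open>x\<close>
  with \<open>n \<le> d_Iw(x) - d_ur(x)\<close>, see \<open>dur_le_iff\<close> and \<open>dual_dur_ge_iff\<close>.\<close>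
definition plus_end :: "int \<Rightarrow> int" where
  "plus_end n = (if even n then t\<^sub>1 + (int p + 1) * (n div 2 - 1) + tgap - 1
      else t\<^sub>1 + (int p + 1) * (n div 2 - 1) + int p)"

definition minus_start :: "int \<Rightarrow> int" where
  "minus_start n = (let u = n - 1 + 2 * \<delta> - 2 * t\<^sub>1; q0 = u div (2 * int p);
      r0 = u mod (2 * int p) in
     t\<^sub>1 + (int p + 1) * q0 + (if odd r0 then (r0 + 1) div 2 else
       if r0 \<le> 2 * tgap - 2 then r0 div 2 else r0 div 2 + 1))"

lemma plus_end_cases:
  obtains (ev) m where "n = 2 * m" "plus_end n = t\<^sub>1 + (int p + 1) * (m - 1) + tgap - 1"
        | (od) m where "n = 2 * m + 1" "plus_end n = t\<^sub>1 + (int p + 1) * (m - 1) + int p"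
proof (cases "even n")
  case True
  then obtain m where "n = 2 * m" by (rule evenE)
  thus ?thesis using ev True unfolding plus_end_def by simp
next
  case False
  then obtain m where "n = 2 * m + 1" by (rule oddE)
  thus ?thesis using od False unfolding plus_end_def by simp
qed

lemma minus_start_cases:
  obtains (ev) q0 k where "n - 1 + 2 * \<delta> - 2 * t\<^sub>1 = 2 * int p * q0 + 2 * k + 1"
            "0 \<le> k" "k \<le> int p - 1"
                         "minus_start n = t\<^sub>1 + (int p + 1) * q0 + k + 1" "even n"
        | (od1) q0 k where "n - 1 + 2 * \<delta> - 2 * t\<^sub>1 = 2 * int p * q0 + 2 * k" "0 \<le> k" "k \<le> tgap - 1"
                         "minus_start n = t\<^sub>1 + (int p + 1) * q0 + k" "odd n"
        | (od2) q0 k where "n - 1 + 2 * \<delta> - 2 * t\<^sub>1 = 2 * int p * q0 + 2 * k"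
                  "tgap \<le> k" "k \<le> int p - 1"
                         "minus_start n = t\<^sub>1 + (int p + 1) * q0 + k + 1" "odd n"
proof -
  define u where "u = n - 1 + 2 * \<delta> - 2 * t\<^sub>1"
  define q0 where "q0 = u div (2 * int p)"
  define r0 where "r0 = u mod (2 * int p)"
  have P: "2 * int p > 0" using p_bounds by simp
  have ur: "u = 2 * int p * q0 + r0" unfolding q0_def r0_def by (metis div_mult_mod_eq mult.commute)
  have r: "0 \<le> r0" "r0 < 2 * int p" unfolding r0_def using P by simp_all
  have Q: "minus_start n = t\<^sub>1 + (int p + 1) * q0 +
      (if odd r0 then (r0 + 1) div 2 else if r0 \<le> 2 * tgap - 2 then r0 div 2 else r0 div 2 + 1)"
    unfolding minus_start_def Let_def u_def q0_def r0_def by simp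
  show ?thesis
  proof (cases "odd r0")
    case True
    then obtain k where k: "r0 = 2 * k + 1" by (rule oddE)
    have "even n"
    proof -
      have "n = 2 * (int p * q0 + k + 1 - \<delta> + t\<^sub>1)" using ur k u_def
        by (simp add: algebra_simps)
      thus ?thesis by simp
    qed
    moreover have "(r0 + 1) div 2 = k + 1" using k by simp
    ultimately show ?thesis using ev[of q0 k] ur k r Q True u_def by auto
  next
    case False
    hence "even r0" by simp
    then obtain k where k: "r0 = 2 * k" by (rule evenE)
    have on: "odd n"
    proof -
      have "n = 2 * (int p * q0 + k - \<delta> + t\<^sub>1) + 1" using ur k u_def
        by (simp add: algebra_simps)
      thus ?thesis by simp
    qed
    show ?thesis
    proof (cases "r0 \<le> 2 * tgap - 2")
      case True
      thus ?thesis using od1[of q0 k] ur k r Q False u_def on by auto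
    next
      case F2: False
      thus ?thesis using od2[of q0 k] ur k r Q False u_def on by auto
    qed
  qed
qed

lemma dur_plus_end: "dur (plus_end n) \<le> n - 1" "dur (plus_end n + 1) \<ge> n"
proof -
  have "dur (plus_end n) = n - 1 \<and> dur (plus_end n + 1) = n"
  proof (cases n rule: plus_end_cases)
    case (ev m)
    have "plus_end n = t\<^sub>1 + (int p + 1) * (m - 1) + (tgap - 1)" using ev(2) by simp
    hence "dur (plus_end n) = 2 * (m - 1) + 1 + (if tgap - 1 \<ge> tgap then 1 else 0)"
      using dur_eval[of "tgap - 1" "m - 1"] param_bounds by simp
    moreover have "dur (plus_end n + 1) = 2 * (m - 1) + 1 + (if tgap \<ge> tgap then 1 else 0)"
    proof -
      have "plus_end n + 1 = t\<^sub>1 + (int p + 1) * (m - 1) + tgap" unfolding ev(2) by simp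
      thus ?thesis using dur_eval[of "tgap" "m - 1"] param_bounds by simp
    qed
    ultimately show ?thesis using ev(1) by simp
  next
    case (od m)
    have "dur (plus_end n) = 2 * (m - 1) + 1 + (if int p \<ge> tgap then 1 else 0)"
      unfolding od(2) using dur_eval[of "int p" "m - 1"] param_bounds p_bounds by simp
    moreover have "dur (plus_end n + 1) = 2 * m + 1 + (if 0 \<ge> tgap then 1 else 0)"
    proof -
      have "plus_end n + 1 = t\<^sub>1 + (int p + 1) * m + 0" unfolding od(2)
        by (simp add: algebra_simps)
      thus ?thesis using dur_eval[of 0 m] param_bounds p_bounds by simp
    qed
    ultimately show ?thesis using od(1) param_bounds by simp
  qed
  thus "dur (plus_end n) \<le> n - 1" "dur (plus_end n + 1) \<ge> n" by simp_all
qed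

lemma dual_dur_minus_start: "dual_dur (minus_start n) \<ge> n - 2 + 2 * \<delta>"
                           "dual_dur (minus_start n - 1) < n - 2 + 2 * \<delta>"
proof -
  have "dual_dur (minus_start n) \<ge> n - 2 + 2 * \<delta> \<and> dual_dur (minus_start n - 1) < n - 2 + 2 * \<delta>"
  proof (cases n rule: minus_start_cases)
    case (ev q0 k)
    have g1: "dual_dur (minus_start n)
        = 2 * t\<^sub>1 + 2 * int p * q0 - 1 + 2 * (k + 1) - (if k + 1 \<ge> tgap then 1 else 0)"
      using dual_dur_eval[of "k + 1" q0] ev by (simp add: add.assoc)
    have g2: "dual_dur (minus_start n - 1)
        = 2 * t\<^sub>1 + 2 * int p * q0 - 1 + 2 * k - (if k \<ge> tgap then 1 else 0)"
      using dual_dur_eval[of "k" q0] ev by simp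
    show ?thesis using g1 g2 ev(1) by auto
  next
    case (od1 q0 k)
    have g1: "dual_dur (minus_start n)
        = 2 * t\<^sub>1 + 2 * int p * q0 - 1 + 2 * k - (if k \<ge> tgap then 1 else 0)"
      using dual_dur_eval[of "k" q0] od1 param_bounds by simp
    have g2: "dual_dur (minus_start n - 1) < n - 2 + 2 * \<delta>"
    proof (cases "k = 0")
      case True
      have "minus_start n - 1 = t\<^sub>1 + (int p + 1) * (q0 - 1) + int p" using od1 True
        by (simp add: algebra_simps)
      hence "dual_dur (minus_start n - 1)
          = 2 * t\<^sub>1 + 2 * int p * (q0 - 1) - 1 + 2 * int p - (if int p \<ge> tgap then 1 else 0)"
        using dual_dur_eval[of "int p" "q0 - 1"] p_bounds by simp
      thus ?thesis using od1(1) True param_bounds by (simp add: algebra_simps)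
    next
      case False
      have qq: "minus_start n - 1 = t\<^sub>1 + (int p + 1) * q0 + (k - 1)" using od1 by simp
      have "dual_dur (t\<^sub>1 + (int p + 1) * q0 + (k - 1))
          = 2 * t\<^sub>1 + 2 * int p * q0 - 1 + 2 * (k - 1) - (if k - 1 \<ge> tgap then 1 else 0)"
        using od1 False param_bounds by (intro dual_dur_eval) auto
      hence "dual_dur (minus_start n - 1)
          = 2 * t\<^sub>1 + 2 * int p * q0 - 1 + 2 * (k - 1) - (if k - 1 \<ge> tgap then 1 else 0)"
        unfolding qq .
      thus ?thesis using od1(1) by auto
    qed
    show ?thesis using g1 g2 od1 by auto
  next
    case (od2 q0 k)
    have g1: "dual_dur (minus_start n)
        = 2 * t\<^sub>1 + 2 * int p * q0 - 1 + 2 * (k + 1) - (if k + 1 \<ge> tgap then 1 else 0)"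
      using dual_dur_eval[of "k + 1" q0] od2 param_bounds by (simp add: add.assoc)
    have g2: "dual_dur (minus_start n - 1)
        = 2 * t\<^sub>1 + 2 * int p * q0 - 1 + 2 * k - (if k \<ge> tgap then 1 else 0)"
      using dual_dur_eval[of "k" q0] od2 param_bounds by simp
    show ?thesis using g1 g2 od2 by auto
  qed
  thus "dual_dur (minus_start n) \<ge> n - 2 + 2 * \<delta>" "dual_dur (minus_start n - 1) < n - 2 + 2 * \<delta>"
    by simp_all
qed

lemma plus_end_bounds: "2 * plus_end n \<ge> (int p + 1) * (n - 1 + \<delta>) + k\<^sub>\<epsilon> - int p"
      "2 * plus_end n \<le> (int p + 1) * (n - 1 + \<delta>) + k\<^sub>\<epsilon> - 2 + int p"
proof -
  have "2 * plus_end n - (int p + 1) * (n - 1 + \<delta>)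
      = 2 * t\<^sub>1 + 2 * tgap - 3 - int p - (int p + 1) * \<delta> \<or>
        2 * plus_end n - (int p + 1) * (n - 1 + \<delta>) = 2 * t\<^sub>1 - 2 - (int p + 1) * \<delta>"
  proof (cases n rule: plus_end_cases)
    case (ev m)
    have "2 * plus_end n - (int p + 1) * (n - 1 + \<delta>)
        = 2 * (t\<^sub>1 + (int p + 1) * (m - 1) + tgap - 1) - (int p + 1) * (n - 1 + \<delta>)"
      using ev(2) by simp
    also have "\<dots> = 2 * t\<^sub>1 + 2 * tgap - 3 - int p - (int p + 1) * \<delta>" using ev(1)
      by (simp add: algebra_simps)
    finally show ?thesis by simp
  next
    case (od m)
    have "2 * plus_end n - (int p + 1) * (n - 1 + \<delta>)
        = 2 * (t\<^sub>1 + (int p + 1) * (m - 1) + int p) - (int p + 1) * (n - 1 + \<delta>)"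
      using od(2) by simp
    also have "\<dots> = 2 * t\<^sub>1 - 2 - (int p + 1) * \<delta>" using od(1)
      by (simp add: algebra_simps)
    finally show ?thesis by simp
  qed
  moreover note param_cases p_bounds param_bounds
  ultimately show "2 * plus_end n \<ge> (int p + 1) * (n - 1 + \<delta>) + k\<^sub>\<epsilon> - int p"
      "2 * plus_end n \<le> (int p + 1) * (n - 1 + \<delta>) + k\<^sub>\<epsilon> - 2 + int p"
    by (auto simp: algebra_simps)
qed

lemma plus_minus_bounds:
  "plus_end n + int p * minus_start n \<ge> (int p + 1) * (n - 1 + \<delta>) + 1 - int p"
      "plus_end n + int p * minus_start n \<le> (int p + 1) * (n - 1 + \<delta>) + int p"
proof -
  have "\<exists>k. 0 \<le> k \<and> k \<le> int p - 1 \<and>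
      (plus_end n + int p * minus_start n - (int p + 1) * (n - 1 + \<delta>) = tgap - 2 - k \<or>
          (k \<le> tgap - 1 \<and> plus_end n + int p * minus_start n - (int p + 1) * (n - 1 + \<delta>)
              = - 1 - k) \<or>
          (tgap \<le> k \<and> plus_end n + int p * minus_start n - (int p + 1) * (n - 1 + \<delta>)
              = int p - 1 - k))"
  proof (cases n rule: minus_start_cases)
    case (ev q0 k)
    obtain m where m: "n = 2 * m" "plus_end n = t\<^sub>1 + (int p + 1) * (m - 1) + tgap - 1"
      using ev(5) by (cases n rule: plus_end_cases) auto
    have mm: "m = int p * q0 + k + 1 - \<delta> + t\<^sub>1" using ev(1) m(1)
      by (simp add: algebra_simps)
    have "plus_end n + int p * minus_start n - (int p + 1) * (n - 1 + \<delta>)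
      = (t\<^sub>1 + (int p + 1) * (m - 1) + tgap - 1)
        + int p * (t\<^sub>1 + (int p + 1) * q0 + k + 1) - (int p + 1) * (n - 1 + \<delta>)"
      using m(2) ev(4) by simp
    also have "\<dots> = tgap - 2 - k" unfolding m(1) mm by (simp add: algebra_simps)
    finally have "plus_end n + int p * minus_start n - (int p + 1) * (n - 1 + \<delta>) = tgap - 2 - k" .
    thus ?thesis using ev by (intro exI[of _ k]) auto
  next
    case (od1 q0 k)
    obtain m where m: "n = 2 * m + 1" "plus_end n = t\<^sub>1 + (int p + 1) * (m - 1) + int p"
      using od1(5) by (cases n rule: plus_end_cases) auto
    have mm: "m = int p * q0 + k - \<delta> + t\<^sub>1" using od1(1) m(1)
      by (simp add: algebra_simps)
    have "plus_end n + int p * minus_start n - (int p + 1) * (n - 1 + \<delta>)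
      = (t\<^sub>1 + (int p + 1) * (m - 1) + int p)
        + int p * (t\<^sub>1 + (int p + 1) * q0 + k) - (int p + 1) * (n - 1 + \<delta>)"
      using m(2) od1(4) by simp
    also have "\<dots> = - 1 - k" unfolding m(1) mm by (simp add: algebra_simps)
    finally have "plus_end n + int p * minus_start n - (int p + 1) * (n - 1 + \<delta>) = - 1 - k" .
    thus ?thesis using od1 param_bounds by (intro exI[of _ k]) auto
  next
    case (od2 q0 k)
    obtain m where m: "n = 2 * m + 1" "plus_end n = t\<^sub>1 + (int p + 1) * (m - 1) + int p"
      using od2(5) by (cases n rule: plus_end_cases) auto
    have mm: "m = int p * q0 + k - \<delta> + t\<^sub>1" using od2(1) m(1)
      by (simp add: algebra_simps)
    have "plus_end n + int p * minus_start n - (int p + 1) * (n - 1 + \<delta>)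
      = (t\<^sub>1 + (int p + 1) * (m - 1) + int p)
        + int p * (t\<^sub>1 + (int p + 1) * q0 + k + 1) - (int p + 1) * (n - 1 + \<delta>)"
      using m(2) od2(4) by simp
    also have "\<dots> = int p - 1 - k" unfolding m(1) mm by (simp add: algebra_simps)
    finally have "plus_end n + int p * minus_start n - (int p + 1) * (n - 1 + \<delta>) = int p - 1 - k" .
    thus ?thesis using od2 param_bounds by (intro exI[of _ k]) auto
  qed
  thus "plus_end n + int p * minus_start n \<ge> (int p + 1) * (n - 1 + \<delta>) + 1 - int p"
      "plus_end n + int p * minus_start n \<le> (int p + 1) * (n - 1 + \<delta>) + int p"
    using param_bounds by auto
qed

lemma dur_le_iff: "dur x \<le> n - 1 \<longleftrightarrow> x \<le> plus_end n"
proof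
  assume "dur x \<le> n - 1"
  show "x \<le> plus_end n"
  proof (rule ccontr)
    assume "\<not> x \<le> plus_end n"
    hence "dur (plus_end n + 1) \<le> dur x" by (intro dur_mono) simp
    thus False using dur_plus_end(2)[of n] \<open>dur x \<le> n - 1\<close> by simp
  qed
next
  assume "x \<le> plus_end n"
  thus "dur x \<le> n - 1" using dur_mono dur_plus_end(1)[of n] by (meson order_trans)
qed

lemma dual_dur_ge_iff: "n - 2 + 2 * \<delta> \<le> dual_dur x \<longleftrightarrow> minus_start n \<le> x"
proof
  assume "n - 2 + 2 * \<delta> \<le> dual_dur x"
  show "minus_start n \<le> x"
  proof (rule ccontr)
    assume "\<not> minus_start n \<le> x"
    hence "dual_dur x \<le> dual_dur (minus_start n - 1)" by (intro dual_dur_mono) simp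
    thus False using dual_dur_minus_start(2)[of n] \<open>n - 2 + 2 * \<delta> \<le> dual_dur x\<close>
      by simp
  qed
next
  assume "minus_start n \<le> x"
  thus "n - 2 + 2 * \<delta> \<le> dual_dur x" using dual_dur_mono dual_dur_minus_start(1)[of n]
    by (meson order_trans)
qed

lemma m_n_increment:
  "m_n p a s n kb - m_n p a s (n - 1) kb =
     (if n - 1 + \<delta> \<le> int kb \<and> int kb \<le> plus_end n then 1 else 0)
   - (if minus_start n \<le> int kb \<and> int kb \<le> n - 2 + \<delta> then 1 else 0)"
proof -
  have "m_n p a s n kb - m_n p a s (n - 1) kb =
     (if n - 1 + \<delta> \<le> int kb \<and> dur (int kb) \<le> n - 1 then 1 else 0)
   - (if int kb \<le> n - 2 + \<delta> \<and> n - 2 + 2 * \<delta> \<le> dual_dur (int kb) then 1 else 0)"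
    unfolding m_n_def d_ur_eq d_Iw_def dual_dur_def by (auto simp: min_def)
  thus ?thesis by (simp only: dur_le_iff dual_dur_ge_iff conj_commute)
qed

lemma m_n_eq_zero:
  assumes "t\<^sub>1 + (int p + 1) * (\<bar>n\<bar> + 1) \<le> int kb"
  shows "m_n p a s n kb = 0" "m_n p a s (n - 1) kb = 0"
proof -
  have "(\<bar>n\<bar> + 1) * (int p + 1) \<le> int kb - t\<^sub>1" using assms
    by (simp add: algebra_simps)
  hence "\<bar>n\<bar> + 1 \<le> (int kb - t\<^sub>1) div (int p + 1)"
    using zle_div_iff_mult_le[of "int p + 1"] by simp
  hence "2 * (\<bar>n\<bar> + 1) + 1 \<le> dur (int kb)" using dur_ge_floor[of "int kb"]
    by (smt (verit))
  thus "m_n p a s n kb = 0" "m_n p a s (n - 1) kb = 0" unfolding m_n_def d_ur_eq by auto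
qed

lemma dist_weight_wt:
  assumes "kb' \<noteq> kb"
  shows "1 + int (multiplicity (int p) (wt p a s kb - wt p a s kb')) = dist_weight p kb kb'"
proof -
  have "wt p a s kb - wt p a s kb' = (int p - 1) * (int kb - int kb')"
    unfolding wt_def by (simp add: algebra_simps)
  moreover have "\<not> int p dvd int p - 1"
    using zdvd_imp_le[of "int p" "int p - 1"] p_bounds by auto
  moreover have "prime_elem (int p)" using prime_p by simp
  ultimately show ?thesis
    unfolding dist_weight_def by (simp add: multiplicity_prime_elem_times_other)
qed

lemma vp_g_hat_eq_sum:
  assumes "\<And>kb'. B \<le> kb' \<Longrightarrow> m_n p a s n kb' = 0"
  shows "vp_g_hat p a s n kb = (\<Sum>kb'\<in>{..<B} - {kb}. m_n p a s n kb' * dist_weight p kb kb')"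
  unfolding vp_g_hat_def
proof (rule sum.mono_neutral_cong_left)
  show "{kb'. kb' \<noteq> kb \<and> m_n p a s n kb' \<noteq> 0} \<subseteq> {..<B} - {kb}"
    using assms by (auto simp: not_less[symmetric])
qed (auto simp: dist_weight_wt)

lemma vp_g_hat_increment:
  "vp_g_hat p a s n kb - vp_g_hat p a s (n - 1) kb
    = window_weight p kb (n - 1 + \<delta>) (plus_end n) - window_weight p kb (minus_start n) (n - 2 + \<delta>)"
proof -
  define B where "B = nat (t\<^sub>1 + (int p + 1) * (\<bar>n\<bar> + 1)) + nat (plus_end n) + nat \<bar>n\<bar> + 1"
  define U where "U = {..<B} - {kb}"
  have finite_U: "finite U" unfolding U_def by simp
  define w where "w kb' = dist_weight p kb kb'" for kb'
  define plus where "plus kb' \<longleftrightarrow> n - 1 + \<delta> \<le> int kb' \<and> int kb' \<le> plus_end n"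
    for kb'
  define minus where "minus kb' \<longleftrightarrow> minus_start n \<le> int kb' \<and> int kb' \<le> n - 2 + \<delta>"
    for kb'
  have "t\<^sub>1 + (int p + 1) * (\<bar>n\<bar> + 1) \<le> int kb'" if "B \<le> kb'" for kb'
    using that unfolding B_def by linarith
  hence zero: "m_n p a s n kb' = 0" "m_n p a s (n - 1) kb' = 0" if "B \<le> kb'" for kb'
    using that m_n_eq_zero by auto
  have "vp_g_hat p a s n kb = (\<Sum>kb'\<in>U. m_n p a s n kb' * w kb')"
    "vp_g_hat p a s (n - 1) kb = (\<Sum>kb'\<in>U. m_n p a s (n - 1) kb' * w kb')"
    unfolding U_def w_def by (rule vp_g_hat_eq_sum, rule zero, assumption)+
  hence "vp_g_hat p a s n kb - vp_g_hat p a s (n - 1) kb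
      = (\<Sum>kb'\<in>U. (m_n p a s n kb' - m_n p a s (n - 1) kb') * w kb')"
    by (simp add: sum_subtractf left_diff_distrib)
  also have "\<dots> = (\<Sum>kb'\<in>U. (if plus kb' then w kb' else 0) - (if minus kb' then w kb' else 0))"
    by (intro sum.cong) (simp_all add: m_n_increment plus_def minus_def)
  also have "\<dots> = (\<Sum>kb'\<in>{kb'\<in>U. plus kb'}. w kb') - (\<Sum>kb'\<in>{kb'\<in>U. minus kb'}. w kb')"
    unfolding sum_subtractf sum.inter_filter[OF finite_U] ..
  also have "\<dots> = window_weight p kb (n - 1 + \<delta>) (plus_end n)
      - window_weight p kb (minus_start n) (n - 2 + \<delta>)"
  proof -
    have "int B = int (nat (t\<^sub>1 + (int p + 1) * (\<bar>n\<bar> + 1)))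
        + int (nat (plus_end n)) + int (nat \<bar>n\<bar>) + 1"
      unfolding B_def by simp
    moreover have "0 \<le> int (nat (t\<^sub>1 + (int p + 1) * (\<bar>n\<bar> + 1)))"
        "plus_end n \<le> int (nat (plus_end n))"
      "0 \<le> int (nat (plus_end n))" "\<bar>n\<bar> \<le> int (nat \<bar>n\<bar>)" by simp_all
    ultimately have "plus_end n < int B" "n - 2 + \<delta> < int B" using param_bounds by linarith+
    thus ?thesis unfolding U_def w_def plus_def minus_def by (simp only: window_weight_nat)
  qed
  finally show ?thesis .
qed

lemma d_Iw_half: "d_Iw p a s kb div 2 = int kb + 1 - \<delta>"
  unfolding d_Iw_def by simp

lemma d_new_half: "d_new p a s kb div 2 = int kb + 1 - \<delta> - dur (int kb)"
  unfolding d_new_def d_Iw_def d_ur_eq by simp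

lemma wt_ge_2: "2 \<le> wt p a s kb"
proof -
  have "0 \<le> int kb * (int p - 1)" using p_bounds by simp
  thus ?thesis using k_eps_bounds unfolding wt_def by linarith
qed

definition vp_increment :: "nat \<Rightarrow> int \<Rightarrow> int" where
  "vp_increment kb r = vp_g_hat p a s (int kb + 1 - \<delta> + r) kb
      - vp_g_hat p a s (int kb + 1 - \<delta> + r - 1) kb"

lemma Delta'_increment:
  "2 * (Delta' p a s kb r - Delta' p a s kb (r - 1)) = 2 * vp_increment kb r - (wt p a s kb - 2)"
proof -
  define c where "c = (real_of_int (wt p a s kb) - 2) / 2"
  have "2 * (Delta' p a s kb r - Delta' p a s kb (r - 1)) = 2 * vp_increment kb r - 2 * c"
    unfolding Delta'_def vp_increment_def c_def[symmetric] d_Iw_half by (simp add: algebra_simps)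
  moreover have "2 * c = wt p a s kb - 2" unfolding c_def by simp
  ultimately show ?thesis by simp
qed

lemma vp_increment_windows:
  assumes "n = int kb + 1 - \<delta> + r"
  shows "vp_increment kb r
    = window_weight p kb (kb + r) (plus_end n) - window_weight p kb (minus_start n) (kb + r - 1)"
proof -
  have e: "n - 1 + \<delta> = int kb + r" "n - 2 + \<delta> = int kb + r - 1" using assms
    by simp_all
  have "vp_increment kb r = vp_g_hat p a s n kb - vp_g_hat p a s (n - 1) kb"
    unfolding vp_increment_def assms ..
  thus ?thesis unfolding vp_g_hat_increment e .
qed

lemma window_ends:
  fixes kb :: nat and r :: int
  assumes "1 - d_new p a s kb div 2 \<le> r" "r \<le> d_new p a s kb div 2"
    and n_def: "n = int kb + 1 - \<delta> + r"
  shows "minus_start n \<le> kb" "kb \<le> plus_end n" "-1 \<le> kb + r" "r \<le> kb + 2"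
proof -
  have "n - 2 + 2 * \<delta> \<le> dual_dur kb" using assms(2)
    unfolding n_def d_new_half dual_dur_def by simp
  thus "minus_start n \<le> kb" using dual_dur_ge_iff by blast
  have "dur kb \<le> n - 1" using assms(1) unfolding n_def d_new_half by simp
  thus "kb \<le> plus_end n" using dur_le_iff by blast
  have "-1 \<le> dur kb" by (rule dur_ge_neg1) simp
  thus "-1 \<le> kb + r" "r \<le> kb + 2" using assms(1,2) param_bounds unfolding d_new_half
    by linarith+
qed

lemma window_end_bounds:
  assumes "n = int kb + 1 - \<delta> + r"
  shows "(int p + 1) * (kb + r) + k\<^sub>\<epsilon> - int p \<le> 2 * plus_end n"
    "2 * plus_end n \<le> (int p + 1) * (kb + r) + k\<^sub>\<epsilon> - 2 + int p"
    "(int p + 1) * (kb + r) + 1 - int p \<le> plus_end n + int p * minus_start n"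
    "plus_end n + int p * minus_start n \<le> (int p + 1) * (kb + r) + int p"
proof -
  have "n - 1 + \<delta> = int kb + r" using assms by simp
  thus "(int p + 1) * (kb + r) + k\<^sub>\<epsilon> - int p \<le> 2 * plus_end n"
    "2 * plus_end n \<le> (int p + 1) * (kb + r) + k\<^sub>\<epsilon> - 2 + int p"
    "(int p + 1) * (kb + r) + 1 - int p \<le> plus_end n + int p * minus_start n"
    "plus_end n + int p * minus_start n \<le> (int p + 1) * (kb + r) + int p"
    using plus_end_bounds[of n] plus_minus_bounds[of n] by simp_all
qed

lemma window_sizes:
  fixes kb :: nat and r :: int
  assumes "1 - d_new p a s kb div 2 \<le> r" "r \<le> d_new p a s kb div 2"
    and n_def: "n = int kb + 1 - \<delta> + r" and M_def: "M = plus_end n - kb"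
    and N_def: "N = kb - max (minus_start n) 0" and X_def: "X = M - int p * N"
    and k_def: "k = wt p a s kb"
  shows "0 \<le> N" "0 \<le> M"
    "(int p + 1) * r + 1 - int p \<le> X" "X \<le> (int p + 1) * r + 2 * int p"
    "(int p + 1) * r + 2 - int p \<le> 2 * M - (k - 2)" "2 * M - (k - 2) \<le> (int p + 1) * r + int p"
proof -
  note ends = window_ends[OF assms(1,2) n_def]
  note P = window_end_bounds[OF n_def]
  have distr: "(int p + 1) * (kb + r) = (int p + 1) * kb + (int p + 1) * r"
    by (simp add: algebra_simps)
  have kk: "k = (int p + 1) * kb - 2 * kb + k\<^sub>\<epsilon>" unfolding k_def wt_def
    by (simp add: algebra_simps)
  have Xeq: "X = plus_end n + int p * max (minus_start n) 0 - (int p + 1) * kb"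
    unfolding X_def M_def N_def by (simp add: algebra_simps)
  have pQ: "int p * minus_start n \<le> int p * max (minus_start n) 0"
    by (intro mult_left_mono) auto
  show "0 \<le> N" "0 \<le> M" using ends(1,2) unfolding N_def M_def by simp_all
  show "(int p + 1) * r + 1 - int p \<le> X" using P(3) Xeq distr pQ by linarith
  show "X \<le> (int p + 1) * r + 2 * int p"
  proof (cases "0 \<le> minus_start n")
    case True
    thus ?thesis using P(4) Xeq distr p_bounds by (simp add: max_def)
  next
    case False
    have "(int p + 1) * (- 1) \<le> (int p + 1) * (kb + r)" using ends(3)
      by (intro mult_left_mono) auto
    thus ?thesis using P(2) Xeq distr False k_eps_bounds by (simp add: max_def algebra_simps)
  qed
  show "(int p + 1) * r + 2 - int p \<le> 2 * M - (k - 2)" using P kk distr M_def by linarith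
  show "2 * M - (k - 2) \<le> (int p + 1) * r + int p" using P kk distr M_def by linarith
qed

lemma window_sizes_le:
  fixes kb :: nat and r :: int
  assumes "1 - d_new p a s kb div 2 \<le> r" "r \<le> d_new p a s kb div 2"
    and n_def: "n = int kb + 1 - \<delta> + r" and M_def: "M = plus_end n - kb"
    and N_def: "N = kb - max (minus_start n) 0" and X_def: "X = M - int p * N"
    and k_def: "k = wt p a s kb"
  shows "M \<le> int p ^ 2 * k" "- X \<le> int p ^ 2 * k" "r - 1 \<le> int p ^ 2 * k"
proof -
  note ends = window_ends[OF assms(1,2) n_def]
  have "int kb * 1 \<le> int kb * (int p - 1)" using p_bounds by (intro mult_left_mono) auto
  hence Kk: "kb + 2 \<le> k" using k_eps_bounds unfolding k_def wt_def by linarith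
  have pk: "int p * k \<le> int p ^ 2 * k" "k \<le> int p * k"
    using Kk p_bounds mult_right_mono[of 1 "int p" k] mult_right_mono[of "int p" "int p ^ 2" k]
    by (simp_all add: power2_eq_square)
  have "(int p + 1) * (kb + r) \<le> (int p + 1) * (2 * kb + 2)" using ends(4)
    by (intro mult_left_mono) auto
  hence "M \<le> int p * (kb + 2)"
    using window_end_bounds(2)[OF n_def] k_eps_bounds unfolding M_def by (simp add: algebra_simps)
  moreover have "int p * (kb + 2) \<le> int p * k" "int p * kb \<le> int p * k" using Kk
    by (simp_all add: mult_left_mono)
  ultimately show "M \<le> int p ^ 2 * k" using pk by linarith
  have "N \<le> kb" unfolding N_def by simp
  hence "int p * N \<le> int p * kb" by (intro mult_left_mono) auto
  thus "- X \<le> int p ^ 2 * k"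
    using window_sizes(2)[OF assms] X_def pk \<open>int p * kb \<le> int p * k\<close> by linarith
  show "r - 1 \<le> int p ^ 2 * k" using ends(4) Kk pk by linarith
qed

lemma vp_increment_pos:
  assumes "1 \<le> r" "r \<le> d_new p a s kb div 2"
    and "n = int kb + 1 - \<delta> + r" and "r - 1 \<le> plus_end n - kb"
  shows "vp_increment kb r
    = weight_sum p (plus_end n - kb) - weight_sum p (kb - max (minus_start n) 0)
        - 2 * weight_sum p (r - 1)"
proof -
  have "minus_start n \<le> int kb" using window_ends(1)[of kb r n] assms by simp
  thus ?thesis using assms
    by (simp add: vp_increment_windows window_weight_right window_weight_left)
qed

lemma vp_increment_ge:
  assumes r: "1 \<le> r" and rL: "r \<le> d_new p a s kb div 2"
  shows "(int p - 1) * (r - 1) + 3 - 2 * int (ilog p (r - 1))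
      \<le> 2 * vp_increment kb r - (wt p a s kb - 2)"
proof -
  define n where "n = int kb + 1 - \<delta> + r"
  define M where "M = plus_end n - kb"
  define N where "N = kb - max (minus_start n) 0"
  define X where "X = M - int p * N"
  define k where "k = wt p a s kb"
  have "1 - d_new p a s kb div 2 \<le> r" using r rL by linarith
  note sz = window_sizes[OF this rL n_def M_def N_def X_def k_def]
  have p2: "2 \<le> int p" using p_bounds by simp
  have "int p - 1 \<le> (int p - 1) * r" using r p_bounds mult_left_mono[of 1 r "int p - 1"] by simp
  hence "r - 1 \<le> M" using sz(5) wt_ge_2[of kb] unfolding k_def by (simp add: algebra_simps)
  hence inc: "vp_increment kb r = weight_sum p M - weight_sum p N - 2 * weight_sum p (r - 1)"
    using vp_increment_pos[OF r rL n_def] unfolding M_def N_def by simp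
  have "0 \<le> (int p + 1) * (r - 1)" using r by simp
  hence X0: "0 \<le> X" using sz(3) by (simp add: algebra_simps)
  have "M + legendre_sum p X \<le> weight_sum p M - weight_sum p N"
    using weight_sum_mult_add_ge[OF prime_int_p sz(1) X0] X_def by simp
  moreover have "r - 1 + 2 * legendre_sum p (r - 1) - int (ilog p (r - 1)) \<le> legendre_sum p X"
    using legendre_sum_ge_double[OF p2 r sz(3)] .
  moreover have "weight_sum p (r - 1) = r - 1 + legendre_sum p (r - 1)"
    using weight_sum_eq[OF prime_int_p] r by simp
  moreover have "(int p - 1) * (r - 1) = (int p + 1) * r - 2 * r - int p + 1"
    by (simp add: algebra_simps)
  ultimately show ?thesis using sz(5) unfolding inc k_def by (smt (verit))
qed

lemma Delta'_increment_ge: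
  assumes "1 \<le> r" "r \<le> d_new p a s kb div 2"
  shows "(real p - 1) * real_of_int (r - 1) + 3 - 2 * real (ilog p (r - 1))
    \<le> 2 * (Delta' p a s kb r - Delta' p a s kb (r - 1))"
proof -
  have "real_of_int ((int p - 1) * (r - 1) + 3 - 2 * int (ilog p (r - 1)))
      \<le> real_of_int (2 * vp_increment kb r - (wt p a s kb - 2))"
    using vp_increment_ge[OF assms] by (simp only: of_int_le_iff)
  thus ?thesis unfolding Delta'_increment by simp
qed

lemma window_estimates:
  fixes kb :: nat and r :: int
  assumes "1 - d_new p a s kb div 2 \<le> r" "r \<le> d_new p a s kb div 2"
    and n_def: "n = int kb + 1 - \<delta> + r" and M_def: "M = plus_end n - kb"
    and N_def: "N = kb - max (minus_start n) 0" and X_def: "X = M - int p * N"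
    and k_def: "k = wt p a s kb" and T_def: "T = real (ilog p (int p ^ 2 * k))"
  shows "real_of_int (weight_sum p M) - real_of_int (weight_sum p N)
      \<le> M + X / (real p - 1) + 1 + 2 * T"
    "2 * real_of_int M - (real_of_int k - 2) \<le> (real p + 1) * r + real p"
    "real_of_int X \<le> (real p + 1) * r + 2 * real p"
    "real (ilog p (r - 1)) \<le> T"
proof -
  note sz = window_sizes[OF assms(1-7)] and sz_le = window_sizes_le[OF assms(1-7)]
  have p2: "2 \<le> int p" using p_bounds by simp
  have "real (ilog p M) \<le> T" "real (ilog p (- X)) \<le> T"
    using ilog_mono[OF p2] sz_le(1,2) unfolding T_def by simp_all
  thus "real_of_int (weight_sum p M) - real_of_int (weight_sum p N)
      \<le> M + X / (real p - 1) + 1 + 2 * T"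
    using weight_sum_mult_add_le[OF prime_int_p sz(1), of X] sz(2) X_def by simp
  show "real (ilog p (r - 1)) \<le> T" using ilog_mono[OF p2] sz_le(3) unfolding T_def by simp
  have "real_of_int (2 * M - (k - 2)) \<le> real_of_int ((int p + 1) * r + int p)"
    using sz(6) by (simp only: of_int_le_iff)
  thus "2 * real_of_int M - (real_of_int k - 2) \<le> (real p + 1) * r + real p" by simp
  have "real_of_int X \<le> real_of_int ((int p + 1) * r + 2 * int p)"
    using sz(4) by (simp only: of_int_le_iff)
  thus "real_of_int X \<le> (real p + 1) * r + 2 * real p" by simp
qed

lemma vp_increment_le_pos:
  assumes r: "1 \<le> r" and rL: "r \<le> d_new p a s kb div 2"
  defines "T \<equiv> real (ilog p (int p ^ 2 * wt p a s kb))"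
  shows "2 * real_of_int (vp_increment kb r) - (wt p a s kb - 2)
      \<le> (real p - 1) * r + real p + 16 + 8 * T"
proof -
  define n where "n = int kb + 1 - \<delta> + r"
  define M where "M = plus_end n - kb"
  define N where "N = kb - max (minus_start n) 0"
  define X where "X = M - int p * N"
  have rl: "1 - d_new p a s kb div 2 \<le> r" using r rL by linarith
  note est = window_estimates[OF rl rL n_def M_def N_def X_def refl T_def[THEN meta_eq_to_obj_eq]]
  have p7: "7 \<le> real p" using p_bounds by simp
  have rid: "(real p + 1) * real_of_int r = (real p - 1) * real_of_int r + 2 * real_of_int r"
    by (simp add: algebra_simps)
  show ?thesis
  proof (cases "r - 1 \<le> M")
    case True
    define A where "A = real_of_int X / (real p - 1)"
    define B where "B = real_of_int (r - 1) * real p / (real p - 1)"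
    have "vp_increment kb r = weight_sum p M - weight_sum p N - 2 * weight_sum p (r - 1)"
      using vp_increment_pos[OF r rL n_def] True unfolding M_def N_def by simp
    hence "real_of_int (vp_increment kb r) = real_of_int (weight_sum p M)
        - real_of_int (weight_sum p N)
        - 2 * real_of_int (weight_sum p (r - 1))" by simp
    moreover have "B - 1 - T \<le> real_of_int (weight_sum p (r - 1))"
      using weight_sum_ge[OF prime_int_p, of "r - 1"] r est(4) unfolding B_def by simp
    moreover have "2 * A - 4 * B \<le> 10 - 2 * r"
      using slope_frac_pos[OF p7 est(3)] unfolding A_def B_def by simp
    ultimately show ?thesis using est(1,2) rid unfolding A_def by linarith
  next
    case False
    hence "plus_end n < int kb + r" unfolding M_def by simp
    hence "vp_increment kb r \<le> 0"
      using vp_increment_windows[OF n_def] window_weight_empty window_weight_nonneg by simp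
    moreover have "0 \<le> (real p - 1) * real_of_int r" using r p7 by simp
    ultimately show ?thesis using wt_ge_2[of kb] unfolding T_def by simp
  qed
qed

lemma vp_increment_le_nonpos:
  assumes rl: "1 - d_new p a s kb div 2 \<le> r" and r0: "r \<le> 0"
  defines "T \<equiv> real (ilog p (int p ^ 2 * wt p a s kb))"
  shows "2 * real_of_int (vp_increment kb r) - (wt p a s kb - 2)
      \<le> (real p - 1) * r + real p + 16 + 8 * T"
proof -
  define n where "n = int kb + 1 - \<delta> + r"
  define M where "M = plus_end n - kb"
  define N where "N = kb - max (minus_start n) 0"
  define X where "X = M - int p * N"
  have rL: "r \<le> d_new p a s kb div 2" using rl r0 by linarith
  note est = window_estimates[OF rl rL n_def M_def N_def X_def refl T_def[THEN meta_eq_to_obj_eq]]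
  have p7: "7 \<le> real p" using p_bounds by simp
  define A where "A = real_of_int X / (real p - 1)"
  define C where "C = real_of_int (- r) * real p / (real p - 1)"
  have "vp_increment kb r \<le> weight_sum p M - weight_sum p N + 2 * weight_sum p (- r)"
    using window_weight_across_right[OF r0, of p "int kb" "plus_end n"]
      window_weight_across_left[OF r0, of p "int kb" "minus_start n"]
    unfolding vp_increment_windows[OF n_def] M_def N_def by simp
  hence "real_of_int (vp_increment kb r) \<le> real_of_int (weight_sum p M)
      - real_of_int (weight_sum p N)
      + 2 * real_of_int (weight_sum p (- r))" by (simp flip: of_int_le_iff)
  moreover have "real_of_int (weight_sum p (- r)) \<le> C"
    using weight_sum_le[OF prime_int_p, of "- r"] r0 unfolding C_def by simp
  moreover have "2 * A + 4 * C \<le> 5 - 2 * r"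
    using slope_frac_nonpos[OF p7 est(3)] unfolding A_def C_def by simp
  moreover have "(real p + 1) * real_of_int r = (real p - 1) * real_of_int r + 2 * real_of_int r"
    by (simp add: algebra_simps)
  moreover have "0 \<le> T" unfolding T_def by simp
  ultimately show ?thesis using est(1,2) unfolding A_def by linarith
qed

lemma Delta'_increment_le:
  assumes "1 - d_new p a s kb div 2 \<le> r" "r \<le> d_new p a s kb div 2"
  shows "2 * (Delta' p a s kb r - Delta' p a s kb (r - 1))
    \<le> (real p - 1) * real_of_int r + real p + 16 + 8 * real (ilog p (int p ^ 2 * wt p a s kb))"
  using vp_increment_le_pos[of r kb] vp_increment_le_nonpos[of kb r] assms
  unfolding Delta'_increment by (cases "1 \<le> r") auto

lemma Delta_eq_lower_hull_val:
  "Delta p a s kb x = lower_hull_val (int_graph (d_new p a s kb div 2) (Delta' p a s kb)) x"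
  unfolding Delta_def int_graph_def ..

lemma Delta_diff_ge:
  assumes l: "1 \<le> l" "l \<le> d_new p a s kb div 2"
  shows "(real p - 1) * real_of_int (l - 1) + 3 - 2 * real (ilog p (l - 1))
    \<le> 2 * (Delta p a s kb l - Delta p a s kb (l - 1))"
proof -
  define \<beta> where "\<beta> = ((real p - 1) * real_of_int (l - 1) + 3 - 2 * real (ilog p (l - 1))) / 2"
  have "\<beta> \<le> Delta' p a s kb r - Delta' p a s kb (r - 1)"
    if r: "l \<le> r" "r \<le> d_new p a s kb div 2" for r
  proof -
    have "ilog p (l - 1 + int (nat (r - l))) \<le> ilog p (l - 1) + nat (r - l)"
      using ilog_add_le[of p "l - 1" "nat (r - l)"] l p_bounds by simp
    hence "real (ilog p (r - 1)) \<le> real (ilog p (l - 1)) + real_of_int (r - l)" using r by simp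
    moreover have "2 * real_of_int (r - l) \<le> (real p - 1) * real_of_int (r - l)"
      using r p_bounds by (intro mult_right_mono) auto
    moreover have "(real p - 1) * real_of_int (r - 1) + 3 - 2 * real (ilog p (r - 1))
        \<le> 2 * (Delta' p a s kb r - Delta' p a s kb (r - 1))"
      using r l by (intro Delta'_increment_ge) auto
    moreover have "(real p - 1) * real_of_int (r - 1)
        = (real p - 1) * real_of_int (l - 1) + (real p - 1) * real_of_int (r - l)"
      by (simp add: algebra_simps)
    ultimately show ?thesis unfolding \<beta>_def by (simp add: field_simps)
  qed
  hence "\<beta> \<le> Delta p a s kb l - Delta p a s kb (l - 1)"
    unfolding Delta_eq_lower_hull_val using l by (intro lower_hull_diff_ge) auto
  thus ?thesis unfolding \<beta>_def by simp
qed

lemma Delta_diff_le: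
  assumes l: "1 \<le> l" "l \<le> d_new p a s kb div 2"
  shows "2 * (Delta p a s kb l - Delta p a s kb (l - 1))
    \<le> (real p - 1) * real_of_int l + real p + 16 + 8 * real (ilog p (int p ^ 2 * wt p a s kb))"
proof -
  define \<gamma> where "\<gamma> = ((real p - 1) * real_of_int l + real p + 16
    + 8 * real (ilog p (int p ^ 2 * wt p a s kb))) / 2"
  have "Delta' p a s kb r - Delta' p a s kb (r - 1) \<le> \<gamma>"
    if r: "- (d_new p a s kb div 2) < r" "r \<le> l" for r
  proof -
    have "(real p - 1) * real_of_int r \<le> (real p - 1) * real_of_int l"
      using r p_bounds by (intro mult_left_mono) auto
    thus ?thesis using Delta'_increment_le[of kb r] r l unfolding \<gamma>_def by simp
  qed
  hence "Delta p a s kb l - Delta p a s kb (l - 1) \<le> \<gamma>"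
    unfolding Delta_eq_lower_hull_val using l by (intro lower_hull_diff_le) auto
  thus ?thesis unfolding \<gamma>_def by simp
qed

lemma ilog_le_log_succ: "1 \<le> l \<Longrightarrow> real (ilog p (l - 1)) \<le> log p l"
proof (cases "l = 1")
  case False
  assume "1 \<le> l"
  hence "real (ilog p (l - 1)) \<le> log p (l - 1)"
    using ilog_le_log[of "int p" "l - 1"] False p_bounds by simp
  also have "\<dots> \<le> log p l" using False \<open>1 \<le> l\<close> p_bounds by simp
  finally show ?thesis .
qed (simp add: ilog_def)

lemma ilog_weight_le: "real (ilog p (int p ^ 2 * wt p a s kb)) \<le> 2 + log p (wt p a s kb)"
proof -
  have k2: "2 \<le> wt p a s kb" by (rule wt_ge_2)
  hence "1 * 1 \<le> int p ^ 2 * wt p a s kb" using p_bounds by (intro mult_mono one_le_power) auto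
  hence "real (ilog p (int p ^ 2 * wt p a s kb)) \<le> log p (real p ^ 2 * wt p a s kb)"
    using ilog_le_log[of "int p" "int p ^ 2 * wt p a s kb"] p_bounds by simp
  also have "\<dots> = 2 + log p (wt p a s kb)" using k2 p_bounds
    by (simp add: log_mult log_nat_power)
  finally show ?thesis .
qed

lemma Delta_diff_ge_log:
  assumes "1 \<le> l" "l \<le> d_new p a s kb div 2"
  shows "(real p + 1) * l - (real p + 1 + (log p l)\<^sup>2)
    \<le> 2 * (real p + 1) / (real p - 1) * (Delta p a s kb l - Delta p a s kb (l - 1))"
proof -
  define b where "b = (real p + 1) / (real p - 1)"
  have b: "0 < b" "b \<le> 3" "b * (real p - 1) = real p + 1"
    using p_bounds unfolding b_def by (simp_all add: divide_le_eq)
  have "b * ((real p - 1) * real_of_int (l - 1) + 3 - 2 * real (ilog p (l - 1)))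
      \<le> b * (2 * (Delta p a s kb l - Delta p a s kb (l - 1)))"
    using Delta_diff_ge[OF assms] b by (intro mult_left_mono) auto
  moreover have "- (log p l)\<^sup>2 \<le> b * (3 - 2 * real (ilog p (l - 1)))"
    using scaled_linear_ge_neg_square[OF b(1,2) ilog_le_log_succ[OF assms(1)]] .
  moreover have "b * ((real p - 1) * real_of_int (l - 1)) = (real p + 1) * real_of_int (l - 1)"
    by (simp add: mult.assoc[symmetric] b(3))
  hence "b * ((real p - 1) * real_of_int (l - 1) + 3 - 2 * real (ilog p (l - 1)))
      = (real p + 1) * l - (real p + 1) + b * (3 - 2 * real (ilog p (l - 1)))"
    by (simp add: algebra_simps)
  moreover have "2 * (real p + 1) / (real p - 1) * (Delta p a s kb l - Delta p a s kb (l - 1))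
      = b * (2 * (Delta p a s kb l - Delta p a s kb (l - 1)))"
    unfolding b_def by (simp only: divide_inverse ac_simps)
  ultimately show ?thesis by linarith
qed

lemma Delta_diff_le_log:
  "\<exists>C > 0. \<forall>kb l. 1 \<le> l \<and> l \<le> d_new p a s kb div 2 \<longrightarrow>
      2 * (real p + 1) / (real p - 1) * (Delta p a s kb l - Delta p a s kb (l - 1))
      \<le> (real p + 1) * l + C * (log p (wt p a s kb))\<^sup>2"
proof -
  define b where "b = (real p + 1) / (real p - 1)"
  have b: "0 < b" "b * (real p - 1) = real p + 1"
    using p_bounds unfolding b_def by simp_all
  define y0 where "y0 = log p 2"
  have y0: "0 < y0" unfolding y0_def using p_bounds by simp
  define C where "C = b * (real p + 32) / y0\<^sup>2 + 8 * b / y0"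
  have "b * (2 * (Delta p a s kb l - Delta p a s kb (l - 1))) \<le> (real p + 1) * l + C * (log p k)\<^sup>2"
    if l: "1 \<le> l" "l \<le> d_new p a s kb div 2" and k: "k = wt p a s kb" for kb l k
  proof -
    have "b * (2 * (Delta p a s kb l - Delta p a s kb (l - 1)))
        \<le> b * ((real p - 1) * real_of_int l + real p + 16 + 8 * real (ilog p (int p ^ 2 * k)))"
      using Delta_diff_le[OF l] b unfolding k by (intro mult_left_mono) auto
    also have "\<dots> \<le> (real p + 1) * l + (b * (real p + 32) + 8 * b * log p k)"
    proof -
      have "b * ((real p - 1) * real_of_int l) = (real p + 1) * real_of_int l"
        by (simp add: mult.assoc[symmetric] b(2))
      moreover have "b * (8 * real (ilog p (int p ^ 2 * k))) \<le> b * (8 * (2 + log p k))"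
        using ilog_weight_le[of kb] b(1) unfolding k by (intro mult_left_mono) auto
      ultimately show ?thesis by (simp add: distrib_left algebra_simps)
    qed
    also have "\<dots> \<le> (real p + 1) * l + C * (log p k)\<^sup>2"
    proof -
      have "y0 \<le> log p k" unfolding y0_def k using wt_ge_2[of kb] p_bounds by simp
      hence "b * (real p + 32) + 8 * b * log p k \<le> C * (log p k)\<^sup>2"
        unfolding C_def using b y0 p_bounds by (intro affine_le_square) auto
      thus ?thesis by simp
    qed
    finally show ?thesis .
  qed
  moreover have "2 * (real p + 1) / (real p - 1) * d = b * (2 * d)" for d
    unfolding b_def by (simp only: divide_inverse ac_simps)
  moreover have "0 < C" unfolding C_def using b y0 by (simp add: add_pos_pos)
  ultimately show ?thesis by auto
qed

end

theorem lemma3p7: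
  fixes p a s :: nat
  assumes "prime p" and "p \<ge> 7" and "1 \<le> a" and "a \<le> p - 4" and "s \<le> p - 2"
  shows "\<exists>C1 C2 C3 :: real. C1 > 0 \<and> C2 > 0 \<and> C3 > 0 \<and>
    (\<forall>kb :: nat. \<forall>l :: int. 1 \<le> l \<and> l \<le> d_new p a s kb div 2 \<longrightarrow>
       0 \<le> - (C2 + C3 * (log (real p) (real_of_int l))\<^sup>2) + (real p + 1) * real_of_int l
     \<and> - (C2 + C3 * (log (real p) (real_of_int l))\<^sup>2) + (real p + 1) * real_of_int l
         \<le> 2 * (real p + 1) / (real p - 1) * (Delta p a s kb l - Delta p a s kb (l - 1))
     \<and> 2 * (real p + 1) / (real p - 1) * (Delta p a s kb l - Delta p a s kb (l - 1))
         \<le> (real p + 1) * real_of_int l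
            + C1 * (log (real p) (real_of_int (wt p a s kb)))\<^sup>2)"
proof -
  interpret dimension_setting p a s using assms by unfold_locales
  obtain C1 where C1: "0 < C1" and upper: "\<forall>kb l. 1 \<le> l \<and> l \<le> d_new p a s kb div 2 \<longrightarrow>
      2 * (real p + 1) / (real p - 1) * (Delta p a s kb l - Delta p a s kb (l - 1))
      \<le> (real p + 1) * l + C1 * (log p (wt p a s kb))\<^sup>2"
    using Delta_diff_le_log by blast
  have "0 \<le> - (real p + 1 + 1 * (log p l)\<^sup>2) + (real p + 1) * l"
    and "- (real p + 1 + 1 * (log p l)\<^sup>2) + (real p + 1) * l
      \<le> 2 * (real p + 1) / (real p - 1) * (Delta p a s kb l - Delta p a s kb (l - 1))"
    if l: "1 \<le> l \<and> l \<le> d_new p a s kb div 2" for kb l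
  proof -
    have "(real p + 1) * (l - 1) = (real p + 1) * l - (real p + 1)" by (simp add: algebra_simps)
    thus "0 \<le> - (real p + 1 + 1 * (log p l)\<^sup>2) + (real p + 1) * l"
      using log_squared_le[of p l] assms(2) l by simp
    show "- (real p + 1 + 1 * (log p l)\<^sup>2) + (real p + 1) * l
        \<le> 2 * (real p + 1) / (real p - 1) * (Delta p a s kb l - Delta p a s kb (l - 1))"
      using Delta_diff_ge_log[of l kb] l by simp
  qed
  thus ?thesis using C1 upper by (intro exI[of _ C1] exI[of _ "real p + 1"] exI[of _ 1]) auto
qed

end
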